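(* Let $F$ be a field and $n\in\mathbb N\cup\{\infty\}$. Every almost identity PC-map $\varphi:\mathrm{UT}(n,F)\to\mathrm{UT}(n,F)$ is a central map, i.e. $\varphi(a)=af(a)$ for some function $f$ from $\mathrm{UT}(n,F)$ to its center $C$. In particular, for finite $n$ one has $\varphi(a)=a\,t_{1n}(f(a))$ for some function $f:\mathrm{UT}(n,F)\to F$, and for $n=\infty$, $\varphi$ is the identity.
   Context: $\mathrm{UT}(n,F)$ is the group of upper unitriangular $n\times n$ matrices over $F$ (for $n=\infty$: all $\mathbb N\times\mathbb N$ matrices with $1$ on the diagonal and $0$ below it). $e$ is the identity, $e_{ij}$ the matrix unit, $t_{ij}(\alpha)=e+\alpha e_{ij}$ ($i<j$). $[x,y]=xyx^{-1}y^{-1}$. A PC-map is a bijection $\varphi$ of the group with $\varphi([x,y])=[\varphi(x),\varphi(y)]$ for all $x,y$; it is almost identity if $\varphi(t_{ij}(\alpha))=t_{ij}(\alpha)$ for all $i<j$, $\alpha\in F$. The center $C$ of $\mathrm{UT}(n,F)$ is trivial if $n=\infty$ and is $\{t_{1n}(\alpha):\alpha\in F\}$ for finite $n$. *)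

theory Defs
  imports Main "HOL-Library.Extended_Nat"
begin

text \<open>Matrices over a field are functions nat => nat => 'a, indices start at 1.
  The size n is an extended natural number; n = \<infinity> gives N x N matrices.
  Entries outside the index range are 0.\<close>

type_synonym 'a mat = "nat \<Rightarrow> nat \<Rightarrow> 'a"

definition idx :: "enat \<Rightarrow> nat set" where
  "idx n = {i. 1 \<le> i \<and> enat i \<le> n}"

definition UT :: "enat \<Rightarrow> ('a::field) mat set" where
  "UT n = {A. (\<forall>i j. A i j \<noteq> 0 \<longrightarrow> i \<in> idx n \<and> j \<in> idx n \<and> i \<le> j)
               \<and> (\<forall>i \<in> idx n. A i i = 1)}"

text \<open>Product of upper triangular matrices: only finitely many terms are nonzero.\<close>
definition ut_mult :: "('a::field) mat \<Rightarrow> 'a mat \<Rightarrow> 'a mat" where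
  "ut_mult A B = (\<lambda>i j. \<Sum>k\<in>{i..j}. A i k * B k j)"

definition ut_one :: "enat \<Rightarrow> ('a::field) mat" where
  "ut_one n = (\<lambda>i j. if i = j \<and> i \<in> idx n then 1 else 0)"

definition ut_inv :: "enat \<Rightarrow> ('a::field) mat \<Rightarrow> 'a mat" where
  "ut_inv n A = (THE B. B \<in> UT n \<and> ut_mult A B = ut_one n)"

definition ut_comm :: "enat \<Rightarrow> ('a::field) mat \<Rightarrow> 'a mat \<Rightarrow> 'a mat" where
  "ut_comm n x y = ut_mult (ut_mult (ut_mult x y) (ut_inv n x)) (ut_inv n y)"

definition transv :: "enat \<Rightarrow> nat \<Rightarrow> nat \<Rightarrow> 'a::field \<Rightarrow> 'a mat" where
  "transv n i j \<alpha> = (\<lambda>p q. ut_one n p q + (if p = i \<and> q = j then \<alpha> else 0))"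

definition ut_center :: "enat \<Rightarrow> ('a::field) mat set" where
  "ut_center n = {c \<in> UT n. \<forall>x \<in> UT n. ut_mult c x = ut_mult x c}"

definition PC_map :: "enat \<Rightarrow> (('a::field) mat \<Rightarrow> 'a mat) \<Rightarrow> bool" where
  "PC_map n \<phi> \<longleftrightarrow> bij_betw \<phi> (UT n) (UT n) \<and>
     (\<forall>x \<in> UT n. \<forall>y \<in> UT n. \<phi> (ut_comm n x y) = ut_comm n (\<phi> x) (\<phi> y))"

definition almost_identity :: "enat \<Rightarrow> (('a::field) mat \<Rightarrow> 'a mat) \<Rightarrow> bool" where
  "almost_identity n \<phi> \<longleftrightarrow>
     (\<forall>i j \<alpha>. i \<in> idx n \<and> j \<in> idx n \<and> i < j \<longrightarrow> \<phi> (transv n i j \<alpha>) = transv n i j \<alpha>)"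

end

theory Submission
  imports Defs
begin

text \<open>Since \<open>\<phi>\<close> fixes the transvections and preserves commutators, \<open>\<phi>[x, t] = [\<phi>(x), t]\<close> for every
  transvection \<open>t\<close>. Commutators with transvections are row matrices \<open>e + \<Sum> v\<^sub>b e\<^sub>1\<^sub>b\<close> or column matrices
  \<open>e + \<Sum> v\<^sub>a e\<^sub>a\<^sub>q\<close> exposing single rows and columns of \<open>x\<close>; whenever such a commutator is itself fixed
  by \<open>\<phi>\<close>, the matrices \<open>x\<close> and \<open>\<phi>(x)\<close> agree in the exposed entries.

  First \<open>\<phi>\<close> fixes the row matrices with \<open>v\<^sub>2 = 0\<close> (for \<open>n = N\<close> finite such a matrix is a commutator
  \<open>[G, r]\<close> of a row matrix \<open>r\<close> with a matrix \<open>G\<close> whose rows \<open>2, \<dots>, N\<close> are preserved by \<open>\<phi>\<close>). Row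
  \<open>m \<ge> 2\<close> of \<open>a\<^sup>-\<^sup>1\<close> is read off the row matrix \<open>[a, t\<^sub>1\<^sub>m(1)]\<close>, so \<open>a\<close> and \<open>\<phi>(a)\<close> agree below the first
  row. Then \<open>\<phi>\<close> fixes column matrices in the last column, and \<open>[a, t\<^sub>b\<^sub>N(1)]\<close> shows that \<open>a\<close> and
  \<open>\<phi>(a)\<close> agree in each column \<open>b < N\<close>. Only the entry \<open>(1, N)\<close> remains, so \<open>\<phi>(a) = a t\<^sub>1\<^sub>N(\<gamma>)\<close>
  with \<open>t\<^sub>1\<^sub>N(\<gamma>)\<close> central. For \<open>n = \<infinity>\<close> there is no last column, and row \<open>1\<close> is reached through the
  commutators \<open>[a, t\<^sub>m\<^sub>,\<^sub>m\<^sub>+\<^sub>1(1)]\<close> instead.\<close>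

section \<open>The group of unitriangular matrices\<close>

lemma zero_notin_idx [simp]: "0 \<notin> idx n"
  by (simp add: idx_def)

lemma one_in_idx_iff: "1 \<in> idx n \<longleftrightarrow> 1 \<le> n"
  by (simp add: idx_def one_enat_def)

lemma idx_enat: "i \<in> idx (enat N) \<longleftrightarrow> 1 \<le> i \<and> i \<le> N"
  by (simp add: idx_def)

lemma idx_infinity: "i \<in> idx \<infinity> \<longleftrightarrow> 1 \<le> i"
  by (simp add: idx_def)

lemma idx_downward_closed: "j \<in> idx n \<Longrightarrow> 1 \<le> i \<Longrightarrow> i \<le> j \<Longrightarrow> i \<in> idx n"
  unfolding idx_def using order_trans[of "enat i" "enat j" n] by auto

lemma sum_eq_single:
  assumes "finite A" "m \<in> A" "\<And>k. k \<in> A \<Longrightarrow> k \<noteq> m \<Longrightarrow> f k = 0"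
  shows "sum f A = f m"
proof -
  have "sum f A = f m + sum f (A - {m})" using assms by (simp add: sum.remove)
  also have "sum f (A - {m}) = 0" using assms by (intro sum.neutral) auto
  finally show ?thesis by simp
qed

definition upper_triangular :: "('a::field) mat \<Rightarrow> bool" where
  "upper_triangular A \<longleftrightarrow> (\<forall>i j. A i j \<noteq> 0 \<longrightarrow> i \<le> j)"

lemma UT_nonzeroD:
  assumes "A \<in> UT n" "A i j \<noteq> 0"
  shows "i \<in> idx n" "j \<in> idx n" "i \<le> j"
  using assms unfolding UT_def by auto

lemma UT_I:
  assumes "\<And>i j. A i j \<noteq> 0 \<Longrightarrow> i \<in> idx n \<and> j \<in> idx n \<and> i \<le> j"
    and "\<And>i. i \<in> idx n \<Longrightarrow> A i i = 1"
  shows "A \<in> UT n"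
  using assms unfolding UT_def by auto

lemma UT_diag: "A \<in> UT n \<Longrightarrow> i \<in> idx n \<Longrightarrow> A i i = 1"
  unfolding UT_def by auto

lemma UT_upper_triangular: "A \<in> UT n \<Longrightarrow> upper_triangular A"
  unfolding UT_def upper_triangular_def by auto

lemma UT_below_diag: "A \<in> UT n \<Longrightarrow> j < i \<Longrightarrow> A i j = 0"
  using UT_nonzeroD(3) by fastforce

lemma UT_row_outside: "A \<in> UT n \<Longrightarrow> i \<notin> idx n \<Longrightarrow> A i j = 0"
  using UT_nonzeroD(1) by fastforce

lemma UT_col_outside: "A \<in> UT n \<Longrightarrow> j \<notin> idx n \<Longrightarrow> A i j = 0"
  using UT_nonzeroD(2) by fastforce

lemma UT_row_0: "A \<in> UT n \<Longrightarrow> A 0 j = 0"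
  by (simp add: UT_row_outside)

lemma UT_col_0: "A \<in> UT n \<Longrightarrow> A i 0 = 0"
  by (simp add: UT_col_outside)

lemma UT_col_1: "A \<in> UT n \<Longrightarrow> i \<noteq> 1 \<Longrightarrow> A i 1 = 0"
  using UT_nonzeroD[of A n i 1] by (fastforce simp: idx_def)

lemma ut_mult_eq_sum:
  assumes "upper_triangular A" "upper_triangular B" "finite K" "{i..j} \<subseteq> K"
  shows "ut_mult A B i j = (\<Sum>k\<in>K. A i k * B k j)"
  unfolding ut_mult_def
proof (rule sum.mono_neutral_left[OF assms(3,4)])
  show "\<forall>k\<in>K - {i..j}. A i k * B k j = 0"
    using assms(1,2) unfolding upper_triangular_def by (auto, metis leD mult_eq_0_iff)
qed

lemma ut_mult_assoc:
  assumes A: "upper_triangular A" and B: "upper_triangular B" and C: "upper_triangular C"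
  shows "ut_mult (ut_mult A B) C = ut_mult A (ut_mult B C)"
proof (intro ext)
  fix i j
  have AB: "ut_mult A B i k = (\<Sum>l\<in>{i..j}. A i l * B l k)" if "k \<in> {i..j}" for k
    using that by (intro ut_mult_eq_sum[OF A B]) auto
  have BC: "ut_mult B C l j = (\<Sum>k\<in>{i..j}. B l k * C k j)" if "l \<in> {i..j}" for l
    using that by (intro ut_mult_eq_sum[OF B C]) auto
  have "ut_mult (ut_mult A B) C i j = (\<Sum>k\<in>{i..j}. (\<Sum>l\<in>{i..j}. A i l * B l k) * C k j)"
    unfolding ut_mult_def[of "ut_mult A B"] using AB by (auto intro: sum.cong)
  also have "\<dots> = (\<Sum>k\<in>{i..j}. \<Sum>l\<in>{i..j}. A i l * (B l k * C k j))"
    by (simp add: sum_distrib_right mult.assoc)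
  also have "\<dots> = (\<Sum>l\<in>{i..j}. A i l * (\<Sum>k\<in>{i..j}. B l k * C k j))"
    by (subst sum.swap) (simp add: sum_distrib_left)
  also have "\<dots> = ut_mult A (ut_mult B C) i j"
    unfolding ut_mult_def[of A] using BC by (auto intro: sum.cong)
  finally show "ut_mult (ut_mult A B) C i j = ut_mult A (ut_mult B C) i j" .
qed

lemma ut_one_UT: "ut_one n \<in> UT n"
  unfolding UT_def ut_one_def by auto

lemma ut_mult_one_left:
  assumes "A \<in> UT n" shows "ut_mult (ut_one n) A = A"
proof (intro ext)
  fix i j
  have "ut_mult (ut_one n) A i j = (\<Sum>k\<in>{i..j}. if k = i then (if i \<in> idx n then A i j else 0) else 0)"
    unfolding ut_mult_def by (rule sum.cong[OF refl]) (auto simp: ut_one_def)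
  then show "ut_mult (ut_one n) A i j = A i j"
    using assms by (auto simp: UT_row_outside UT_below_diag)
qed

lemma ut_mult_one_right:
  assumes "A \<in> UT n" shows "ut_mult A (ut_one n) = A"
proof (intro ext)
  fix i j
  have "ut_mult A (ut_one n) i j = (\<Sum>k\<in>{i..j}. if k = j then (if j \<in> idx n then A i j else 0) else 0)"
    unfolding ut_mult_def by (rule sum.cong[OF refl]) (auto simp: ut_one_def)
  then show "ut_mult A (ut_one n) i j = A i j"
    using assms by (auto simp: UT_col_outside UT_below_diag)
qed

lemma ut_mult_UT:
  assumes A: "A \<in> UT n" and B: "B \<in> UT n"
  shows "ut_mult A B \<in> UT n"
proof (rule UT_I)
  fix i j assume "ut_mult A B i j \<noteq> 0"
  then obtain k where "k \<in> {i..j}" "A i k * B k j \<noteq> 0"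
    unfolding ut_mult_def by (meson sum.neutral)
  then show "i \<in> idx n \<and> j \<in> idx n \<and> i \<le> j"
    using UT_nonzeroD[OF A, of i k] UT_nonzeroD[OF B, of k j] by auto
next
  fix i assume "i \<in> idx n"
  then show "ut_mult A B i i = 1" using A B by (simp add: ut_mult_def UT_diag)
qed

lemma ut_mult_assoc_UT:
  "A \<in> UT n \<Longrightarrow> B \<in> UT n \<Longrightarrow> C \<in> UT n \<Longrightarrow> ut_mult (ut_mult A B) C = ut_mult A (ut_mult B C)"
  by (intro ut_mult_assoc UT_upper_triangular)

function ut_rinv :: "enat \<Rightarrow> ('a::field) mat \<Rightarrow> nat \<Rightarrow> nat \<Rightarrow> 'a" where
  "ut_rinv n A i j = (if i \<notin> idx n \<or> j \<notin> idx n \<or> j < i then 0 else if i = j then 1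
      else - (\<Sum>k\<in>{Suc i..j}. A i k * ut_rinv n A k j))"
  by pat_completeness auto
termination by (relation "measure (\<lambda>(n, A, i, j). j - i)") auto

declare ut_rinv.simps [simp del]

lemma ut_rinv_UT: "ut_rinv n A \<in> UT n"
  by (rule UT_I) (auto simp: ut_rinv.simps split: if_splits)

lemma ut_mult_rinv:
  assumes A: "A \<in> UT n" shows "ut_mult A (ut_rinv n A) = ut_one n"
proof (intro ext)
  fix i j
  show "ut_mult A (ut_rinv n A) i j = ut_one n i j"
  proof (cases "i \<in> idx n \<and> j \<in> idx n \<and> i \<le> j")
    case False
    then have "\<forall>k\<in>{i..j}. A i k * ut_rinv n A k j = 0"
      using A by (auto simp: UT_row_outside ut_rinv.simps)
    then have "ut_mult A (ut_rinv n A) i j = 0" unfolding ut_mult_def by (intro sum.neutral)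
    then show ?thesis using False by (auto simp: ut_one_def)
  next
    case True
    then have "ut_mult A (ut_rinv n A) i j
        = A i i * ut_rinv n A i j + (\<Sum>k\<in>{Suc i..j}. A i k * ut_rinv n A k j)"
      by (simp add: ut_mult_def Icc_eq_insert_lb_nat)
    also have "\<dots> = ut_one n i j"
    proof (cases "i = j")
      case False
      then have "ut_rinv n A i j = - (\<Sum>k\<in>{Suc i..j}. A i k * ut_rinv n A k j)"
        using True by (subst ut_rinv.simps) auto
      then show ?thesis using True False A by (simp add: UT_diag ut_one_def)
    qed (use True A in \<open>simp add: UT_diag ut_rinv.simps ut_one_def\<close>)
    finally show ?thesis .
  qed
qed

lemma ut_right_inverse_is_left_inverse:
  assumes A: "A \<in> UT n" and B: "B \<in> UT n" and AB: "ut_mult A B = ut_one n"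
  shows "ut_mult B A = ut_one n"
proof -
  have "A = ut_mult (ut_mult A B) (ut_rinv n B)"
    using A by (simp add: ut_mult_assoc_UT[OF A B ut_rinv_UT] ut_mult_rinv[OF B] ut_mult_one_right)
  also have "\<dots> = ut_rinv n B" using AB by (simp add: ut_mult_one_left ut_rinv_UT)
  finally show ?thesis using B by (simp add: ut_mult_rinv)
qed

lemma ut_inv_UT: "A \<in> UT n \<Longrightarrow> ut_inv n A \<in> UT n"
  and ut_mult_inv_right: "A \<in> UT n \<Longrightarrow> ut_mult A (ut_inv n A) = ut_one n"
  and ut_mult_inv_left: "A \<in> UT n \<Longrightarrow> ut_mult (ut_inv n A) A = ut_one n"
proof -
  assume A: "A \<in> UT n"
  have unique: "B = ut_rinv n A" if "B \<in> UT n" "ut_mult A B = ut_one n" for B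
  proof -
    have "ut_mult (ut_rinv n A) A = ut_one n"
      by (rule ut_right_inverse_is_left_inverse[OF A ut_rinv_UT ut_mult_rinv[OF A]])
    then have "B = ut_mult (ut_mult (ut_rinv n A) A) B"
      using that(1) by (simp add: ut_mult_one_left)
    also have "\<dots> = ut_rinv n A"
      using that by (simp add: ut_mult_assoc_UT[OF ut_rinv_UT A that(1)] ut_rinv_UT ut_mult_one_right)
    finally show ?thesis .
  qed
  have "ut_inv n A = ut_rinv n A"
    unfolding ut_inv_def using unique ut_rinv_UT ut_mult_rinv[OF A] by blast
  then show "ut_inv n A \<in> UT n" and "ut_mult A (ut_inv n A) = ut_one n"
    using ut_rinv_UT ut_mult_rinv[OF A] by auto
  then show "ut_mult (ut_inv n A) A = ut_one n"
    using ut_right_inverse_is_left_inverse[OF A] by blast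
qed

lemma ut_mult_inv_cancel_right:
  "P \<in> UT n \<Longrightarrow> x \<in> UT n \<Longrightarrow> ut_mult (ut_mult P x) (ut_inv n x) = P"
  by (simp add: ut_mult_assoc_UT[of P n x] ut_inv_UT ut_mult_inv_right ut_mult_one_right)

lemma ut_mult_inv_cancel_left:
  "P \<in> UT n \<Longrightarrow> x \<in> UT n \<Longrightarrow> ut_mult (ut_mult P (ut_inv n x)) x = P"
  by (simp add: ut_mult_assoc_UT[of P n] ut_inv_UT ut_mult_inv_left ut_mult_one_right)

lemma ut_comm_UT: "x \<in> UT n \<Longrightarrow> y \<in> UT n \<Longrightarrow> ut_comm n x y \<in> UT n"
  by (simp add: ut_comm_def ut_mult_UT ut_inv_UT)

lemma ut_comm_eq_iff:
  assumes x: "x \<in> UT n" and y: "y \<in> UT n" and Z: "Z \<in> UT n"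
  shows "ut_comm n x y = Z \<longleftrightarrow> ut_mult x y = ut_mult (ut_mult Z y) x"
proof
  assume "ut_comm n x y = Z"
  then show "ut_mult x y = ut_mult (ut_mult Z y) x"
    using x y by (auto simp: ut_comm_def ut_mult_inv_cancel_left ut_mult_UT ut_inv_UT)
next
  assume "ut_mult x y = ut_mult (ut_mult Z y) x"
  then show "ut_comm n x y = Z"
    using x y Z by (simp add: ut_comm_def ut_mult_inv_cancel_right ut_mult_UT)
qed

lemma ut_comm_eq_one_iff:
  "x \<in> UT n \<Longrightarrow> y \<in> UT n \<Longrightarrow> ut_comm n x y = ut_one n \<longleftrightarrow> ut_mult x y = ut_mult y x"
  by (simp add: ut_comm_eq_iff ut_one_UT ut_mult_one_left)

lemma ut_comm_self: "x \<in> UT n \<Longrightarrow> ut_comm n x x = ut_one n"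
  by (simp add: ut_comm_eq_one_iff)

section \<open>Row and column matrices\<close>

definition col_mat :: "enat \<Rightarrow> nat \<Rightarrow> (nat \<Rightarrow> 'a::field) \<Rightarrow> 'a mat" where
  "col_mat n q v = (\<lambda>a b. ut_one n a b + (if b = q then v a else 0))"
definition row_mat :: "enat \<Rightarrow> (nat \<Rightarrow> 'a::field) \<Rightarrow> 'a mat" where
  "row_mat n v = (\<lambda>a b. ut_one n a b + (if a = 1 then v b else 0))"
definition col_vec :: "nat \<Rightarrow> (nat \<Rightarrow> 'a::zero) \<Rightarrow> bool" where
  "col_vec q v \<longleftrightarrow> (\<forall>a. v a \<noteq> 0 \<longrightarrow> 1 \<le> a \<and> a < q)"
definition row_vec :: "enat \<Rightarrow> (nat \<Rightarrow> 'a::zero) \<Rightarrow> bool" where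
  "row_vec n v \<longleftrightarrow> (\<forall>b. v b \<noteq> 0 \<longrightarrow> 2 \<le> b \<and> b \<in> idx n)"
definition vec_mat :: "(nat \<Rightarrow> 'a::field) \<Rightarrow> 'a mat \<Rightarrow> nat \<Rightarrow> 'a" where
  "vec_mat x g b = (\<Sum>k\<in>{..b}. x k * g k b)"
definition mat_vec :: "nat \<Rightarrow> ('a::field) mat \<Rightarrow> (nat \<Rightarrow> 'a) \<Rightarrow> nat \<Rightarrow> 'a" where
  "mat_vec q g v a = (\<Sum>k\<in>{..q}. g a k * v k)"

lemma col_vecD: "col_vec q v \<Longrightarrow> v a \<noteq> 0 \<Longrightarrow> 1 \<le> a \<and> a < q"
  by (auto simp: col_vec_def)

lemma col_vec_beyond: "col_vec q v \<Longrightarrow> q \<le> a \<Longrightarrow> v a = 0"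
  by (auto simp: col_vec_def)

lemma col_vec_delta: "1 \<le> s \<Longrightarrow> s < q \<Longrightarrow> col_vec q (\<lambda>a. if a = s then \<beta> else 0)"
  by (auto simp: col_vec_def)

lemma col_vec_add: "col_vec q (x::nat\<Rightarrow>'a::field) \<Longrightarrow> col_vec q y \<Longrightarrow> col_vec q (\<lambda>k. x k + y k)"
  unfolding col_vec_def by (metis add.left_neutral add.right_neutral)

lemma col_vec_mono: "col_vec l v \<Longrightarrow> l \<le> q \<Longrightarrow> col_vec q v"
  by (auto simp: col_vec_def)

lemma col_vec_UT_column:
  assumes g: "g \<in> UT n" and l: "l \<in> idx n"
  shows "col_vec l (\<lambda>i. g i l - ut_one n i l)"
  unfolding col_vec_def
proof (intro allI impI)
  fix i assume "g i l - ut_one n i l \<noteq> 0"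
  then have "i \<noteq> l" "g i l \<noteq> 0" using UT_diag[OF g l] l by (auto simp: ut_one_def split: if_splits)
  then show "1 \<le> i \<and> i < l" using UT_nonzeroD[OF g, of i l] by (auto simp: idx_def)
qed

lemma row_vecD: "row_vec n v \<Longrightarrow> v b \<noteq> 0 \<Longrightarrow> 2 \<le> b \<and> b \<in> idx n"
  by (auto simp: row_vec_def)

lemma row_vec_idx: "row_vec n x \<Longrightarrow> x k \<noteq> 0 \<Longrightarrow> k \<in> idx n"
  by (auto simp: row_vec_def)

lemma row_vec_0_1: "row_vec n v \<Longrightarrow> v 0 = 0" "row_vec n v \<Longrightarrow> v 1 = 0"
  by (auto simp: row_vec_def)

lemma row_vec_zero: "row_vec n (\<lambda>_. 0)"
  by (simp add: row_vec_def)

lemma row_vec_delta: "m \<in> idx n \<Longrightarrow> 2 \<le> m \<Longrightarrow> row_vec n (\<lambda>b. if b = m then \<beta> else 0)"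
  by (auto simp: row_vec_def)

lemma row_vec_shift:
  assumes w: "row_vec n w" and w2: "w 2 = 0"
  shows "row_vec n (\<lambda>k. w (Suc k))"
  unfolding row_vec_def
proof (intro allI impI)
  fix k assume "w (Suc k) \<noteq> 0"
  then have "2 \<le> Suc k" "Suc k \<in> idx n" "Suc k \<noteq> 2"
    using row_vecD[OF w, of "Suc k"] w2 by (auto simp: numeral_2_eq_2)
  then show "2 \<le> k \<and> k \<in> idx n" using idx_downward_closed[of "Suc k" n k] by auto
qed

lemma row_vec_add: "row_vec n (x::nat\<Rightarrow>'a::field) \<Longrightarrow> row_vec n y \<Longrightarrow> row_vec n (\<lambda>k. x k + y k)"
  unfolding row_vec_def by (metis add.left_neutral add.right_neutral)

lemma col_mat_UT:
  assumes q: "q \<in> idx n" and v: "col_vec q v"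
  shows "col_mat n q v \<in> UT n"
proof (rule UT_I)
  fix i j assume h: "col_mat n q v i j \<noteq> 0"
  show "i \<in> idx n \<and> j \<in> idx n \<and> i \<le> j"
  proof (cases "j = q \<and> v i \<noteq> 0")
    case True
    then have "1 \<le> i" "i < q" using col_vecD[OF v] by auto
    then show ?thesis using True q idx_downward_closed[OF q] by auto
  next
    case False
    then have "col_mat n q v i j = ut_one n i j" by (auto simp: col_mat_def)
    then have "(ut_one n i j :: 'a) \<noteq> 0" using h by metis
    then show ?thesis by (auto simp: ut_one_def split: if_splits)
  qed
next
  fix i assume "i \<in> idx n" then show "col_mat n q v i i = 1"
    using col_vec_beyond[OF v, of q] by (auto simp: col_mat_def ut_one_def)
qed

lemma row_mat_UT:
  assumes one: "1 \<in> idx n" and v: "row_vec n v"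
  shows "row_mat n v \<in> UT n"
proof (rule UT_I)
  fix i j assume h: "row_mat n v i j \<noteq> 0"
  show "i \<in> idx n \<and> j \<in> idx n \<and> i \<le> j"
  proof (cases "i = 1 \<and> v j \<noteq> 0")
    case True
    then show ?thesis using row_vecD[OF v, of j] one by auto
  next
    case False
    then have "row_mat n v i j = ut_one n i j" by (auto simp: row_mat_def)
    then have "(ut_one n i j :: 'a) \<noteq> 0" using h by metis
    then show ?thesis by (auto simp: ut_one_def split: if_splits)
  qed
next
  fix i assume "i \<in> idx n" then show "row_mat n v i i = 1"
    using row_vec_0_1[OF v] by (auto simp: row_mat_def ut_one_def)
qed

lemma transv_eq_col_mat: "s \<noteq> q \<Longrightarrow> transv n s q \<beta> = col_mat n q (\<lambda>a. if a = s then \<beta> else 0)"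
  by (auto simp: transv_def col_mat_def)

lemma transv_eq_row_mat: "q \<noteq> 1 \<Longrightarrow> transv n 1 q \<beta> = row_mat n (\<lambda>b. if b = q then \<beta> else 0)"
  by (rule ext)+ (auto simp: transv_def row_mat_def)

lemma transv_UT: "i \<in> idx n \<Longrightarrow> j \<in> idx n \<Longrightarrow> i < j \<Longrightarrow> transv n i j \<alpha> \<in> UT n"
  by (subst transv_eq_col_mat) (auto intro!: col_mat_UT col_vec_delta simp: idx_def)

lemma row_mat_inject: "row_mat n u = row_mat n v \<Longrightarrow> u = v"
proof
  fix b assume "row_mat n u = row_mat n v"
  then have "row_mat n u 1 b = row_mat n v 1 b" by simp
  then show "u b = v b" by (simp add: row_mat_def)
qed

lemma col_mat_zero: "col_mat n q (\<lambda>_. 0) = ut_one n"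
  by (simp add: col_mat_def)

lemma row_mat_zero: "row_mat n (\<lambda>_. 0) = ut_one n"
  by (simp add: row_mat_def)

lemma upper_triangular_col_mat: "col_vec q v \<Longrightarrow> upper_triangular (col_mat n q v)"
  by (auto simp: upper_triangular_def col_mat_def ut_one_def col_vec_def split: if_splits)

lemma upper_triangular_row_mat: "row_vec n v \<Longrightarrow> upper_triangular (row_mat n v)"
  by (auto simp: upper_triangular_def row_mat_def ut_one_def row_vec_def split: if_splits)

lemma sum_mult_ut_one:
  assumes g: "g \<in> UT n" "b \<in> K" "finite K"
  shows "(\<Sum>k\<in>K. g a k * ut_one n k b) = g a b"
proof -
  have "(\<Sum>k\<in>K. g a k * ut_one n k b) = g a b * ut_one n b b"
    by (rule sum_eq_single) (use g in \<open>auto simp: ut_one_def\<close>)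
  also have "\<dots> = g a b" using g by (auto simp: ut_one_def UT_col_outside)
  finally show ?thesis .
qed

lemma sum_ut_one_mult:
  assumes g: "g \<in> UT n" "finite K" "a \<le> b \<Longrightarrow> a \<in> K"
  shows "(\<Sum>k\<in>K. ut_one n a k * g k b) = g a b"
proof (cases "a \<le> b")
  case True
  have "(\<Sum>k\<in>K. ut_one n a k * g k b) = ut_one n a a * g a b"
    by (rule sum_eq_single) (use g True in \<open>auto simp: ut_one_def\<close>)
  also have "\<dots> = g a b" using g by (auto simp: ut_one_def UT_row_outside)
  finally show ?thesis .
next
  case False
  then show ?thesis using g by (auto simp: ut_one_def UT_below_diag intro!: sum.neutral)
qed

lemma mat_vec_delta: "j \<le> q \<Longrightarrow> mat_vec q g (\<lambda>k. if k = j then \<alpha> else 0) a = g a j * \<alpha>"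
  unfolding mat_vec_def by (subst sum_eq_single[where m=j]) auto

lemma ut_mult_col_mat:
  assumes g: "g \<in> UT n" and v: "col_vec q v"
  shows "ut_mult g (col_mat n q v) a b = g a b + (if b = q then mat_vec q g v a else 0)"
proof -
  have "ut_mult g (col_mat n q v) a b = (\<Sum>k\<in>{..b}. g a k * col_mat n q v k b)"
    by (rule ut_mult_eq_sum) (auto simp: UT_upper_triangular[OF g] upper_triangular_col_mat[OF v])
  also have "\<dots> = (\<Sum>k\<in>{..b}. g a k * ut_one n k b) + (if b = q then (\<Sum>k\<in>{..b}. g a k * v k) else 0)"
    by (cases "b = q") (simp_all add: col_mat_def distrib_left sum.distrib)
  also have "\<dots> = g a b + (if b = q then mat_vec q g v a else 0)"
    by (simp add: sum_mult_ut_one[OF g] mat_vec_def)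
  finally show ?thesis .
qed

lemma col_mat_ut_mult:
  assumes g: "g \<in> UT n" and u: "col_vec q u"
  shows "ut_mult (col_mat n q u) g a b = g a b + u a * g q b"
proof -
  have "ut_mult (col_mat n q u) g a b = (\<Sum>k\<in>{..max b q}. col_mat n q u a k * g k b)"
    by (rule ut_mult_eq_sum) (auto simp: UT_upper_triangular[OF g] upper_triangular_col_mat[OF u])
  also have "\<dots> = (\<Sum>k\<in>{..max b q}. ut_one n a k * g k b + (if k = q then u a * g q b else 0))"
    by (rule sum.cong[OF refl]) (simp add: col_mat_def distrib_right)
  also have "\<dots> = (\<Sum>k\<in>{..max b q}. ut_one n a k * g k b) + (\<Sum>k\<in>{..max b q}. (if k = q then u a * g q b else 0))"
    by (simp add: sum.distrib)
  also have "\<dots> = g a b + u a * g q b"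
    by (subst sum_ut_one_mult[OF g]) auto
  finally show ?thesis .
qed

lemma ut_mult_row_mat:
  assumes g: "g \<in> UT n" and one: "1 \<in> idx n" and v: "row_vec n v"
  shows "ut_mult g (row_mat n v) a b = g a b + (if a = 1 then v b else 0)"
proof -
  have "ut_mult g (row_mat n v) a b = (\<Sum>k\<in>{..b}. g a k * row_mat n v k b)"
    by (rule ut_mult_eq_sum) (auto simp: UT_upper_triangular[OF g] upper_triangular_row_mat[OF v])
  also have "\<dots> = (\<Sum>k\<in>{..b}. g a k * ut_one n k b + (if k = 1 then g a 1 * v b else 0))"
    by (rule sum.cong[OF refl]) (simp add: row_mat_def distrib_left)
  also have "\<dots> = (\<Sum>k\<in>{..b}. g a k * ut_one n k b) + (\<Sum>k\<in>{..b}. if k = 1 then g a 1 * v b else 0)"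
    by (simp add: sum.distrib)
  also have "\<dots> = g a b + (if a = 1 then v b else 0)"
  proof -
    have "(\<Sum>k\<in>{..b}. if k = 1 then g a 1 * v b else 0) = (if a = 1 then v b else 0)"
    proof (cases "1 \<le> b")
      case True then show ?thesis using g one by (auto simp: UT_diag UT_col_1 UT_col_1[unfolded One_nat_def])
    next
      case False then have "b = 0" by simp
      then show ?thesis using row_vec_0_1[OF v] by simp
    qed
    then show ?thesis by (simp add: sum_mult_ut_one[OF g])
  qed
  finally show ?thesis .
qed

lemma row_mat_ut_mult:
  assumes g: "g \<in> UT n" and x: "row_vec n x"
  shows "ut_mult (row_mat n x) g a b = g a b + (if a = 1 then vec_mat x g b else 0)"
proof -
  have "ut_mult (row_mat n x) g a b = (\<Sum>k\<in>{..b}. row_mat n x a k * g k b)"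
    by (rule ut_mult_eq_sum) (auto simp: UT_upper_triangular[OF g] upper_triangular_row_mat[OF x])
  also have "\<dots> = (\<Sum>k\<in>{..b}. ut_one n a k * g k b) + (if a = 1 then vec_mat x g b else 0)"
    by (cases "a = 1") (simp_all add: row_mat_def distrib_right sum.distrib vec_mat_def)
  also have "\<dots> = g a b + (if a = 1 then vec_mat x g b else 0)"
    by (subst sum_ut_one_mult[OF g]) auto
  finally show ?thesis .
qed

lemma ut_mult_transv:
  assumes X: "X \<in> UT n" and sr: "1 \<le> s" "s < r"
  shows "ut_mult X (transv n s r \<beta>) i c = X i c + (if c = r then X i s * \<beta> else 0)"
  using sr by (simp add: transv_eq_col_mat ut_mult_col_mat[OF X col_vec_delta[OF sr]] mat_vec_delta)

lemma transv_ut_mult: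
  assumes X: "X \<in> UT n" and sr: "1 \<le> s" "s < r"
  shows "ut_mult (transv n s r \<beta>) X i c = X i c + (if i = s then \<beta> * X r c else 0)"
  using sr by (simp add: transv_eq_col_mat col_mat_ut_mult[OF X col_vec_delta[OF sr]])

lemma vec_mat_one: "(\<And>k. x k \<noteq> 0 \<Longrightarrow> k \<in> idx n) \<Longrightarrow> vec_mat x (ut_one n) b = x b"
  unfolding vec_mat_def by (subst sum_eq_single[where m=b]) (auto simp: ut_one_def)

lemma vec_mat_add: "vec_mat (\<lambda>k. x k + y k) g b = vec_mat x g b + vec_mat y g b"
  by (simp add: vec_mat_def distrib_right sum.distrib)

lemma vec_mat_diff: "vec_mat (\<lambda>k. x k - y k) g b = vec_mat x g b - vec_mat y g b"
  by (simp add: vec_mat_def left_diff_distrib sum_subtractf)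

lemma vec_mat_delta: "upper_triangular g \<Longrightarrow> vec_mat (\<lambda>k. if k = j then \<alpha> else 0) g b = \<alpha> * g j b"
proof (cases "j \<le> b")
  case True
  then show ?thesis unfolding vec_mat_def by (subst sum_eq_single[where m=j]) auto
next
  case False
  assume "upper_triangular g"
  then have "g j b = 0" using False unfolding upper_triangular_def by force
  then show ?thesis unfolding vec_mat_def using False by (auto intro!: sum.neutral)
qed

lemma ut_mult_eq_vec_mat: "upper_triangular Z \<Longrightarrow> upper_triangular g \<Longrightarrow> ut_mult Z g i b = vec_mat (\<lambda>k. Z i k) g b"
  unfolding vec_mat_def by (rule ut_mult_eq_sum) auto

lemma vec_mat_eq_0_imp_eq_0:
  assumes g: "g \<in> UT n" and x: "\<And>k. x k \<noteq> 0 \<Longrightarrow> k \<in> idx n"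
    and h: "\<And>b. b < c \<Longrightarrow> vec_mat x g b = 0"
  shows "b < c \<Longrightarrow> x b = 0"
proof (induction b rule: less_induct)
  case (less b)
  have "vec_mat x g b = x b * g b b"
    unfolding vec_mat_def
  proof (rule sum_eq_single)
    fix k assume "k \<in> {..b}" "k \<noteq> b"
    then have "k < b" by auto
    then have "x k = 0" using less.IH less.prems by auto
    then show "x k * g k b = 0" by simp
  qed auto
  then show ?case
  proof (cases "x b = 0")
    case False
    then have "b \<in> idx n" using x by blast
    then show ?thesis using h[OF less.prems] \<open>vec_mat x g b = x b * g b b\<close> g by (simp add: UT_diag)
  qed simp
qed

lemma vec_mat_row_mat:
  assumes v: "row_vec n v" and x: "\<And>k. x k \<noteq> 0 \<Longrightarrow> k \<in> idx n"
  shows "vec_mat x (row_mat n v) b = x b + x 1 * v b"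
proof -
  have "vec_mat x (row_mat n v) b = (\<Sum>k\<in>{..b}. x k * ut_one n k b + (if k = 1 then x 1 * v b else 0))"
    unfolding vec_mat_def row_mat_def by (rule sum.cong[OF refl]) (simp add: distrib_left)
  also have "\<dots> = vec_mat x (ut_one n) b + (\<Sum>k\<in>{..b}. (if k = 1 then x 1 * v b else 0))"
    by (simp add: sum.distrib vec_mat_def)
  also have "(\<Sum>k\<in>{..b}. (if k = 1 then x 1 * v b else 0)) = x 1 * v b"
  proof (cases "1 \<le> b")
    case True then show ?thesis by (subst sum_eq_single[where m=1]) auto
  next
    case False then have "b = 0" by simp
    then show ?thesis using row_vec_0_1[OF v] by simp
  qed
  finally show ?thesis using vec_mat_one[OF x] by simp
qed

lemma vec_mat_transv:
  assumes x: "\<And>k. x k \<noteq> 0 \<Longrightarrow> k \<in> idx n" and sr: "s < r"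
  shows "vec_mat x (transv n s r \<beta>) b = x b + (if b = r then x s * \<beta> else 0)"
proof -
  have "vec_mat x (transv n s r \<beta>) b = (\<Sum>k\<in>{..b}. x k * ut_one n k b + (if k = s then (if b = r then x s * \<beta> else 0) else 0))"
    unfolding vec_mat_def transv_def by (rule sum.cong[OF refl]) (auto simp: distrib_left)
  also have "\<dots> = vec_mat x (ut_one n) b + (if b = r then x s * \<beta> else 0)"
    using sr by (simp add: sum.distrib vec_mat_def)
  finally show ?thesis using vec_mat_one[OF x] by simp
qed

lemma row_mat_mult:
  assumes one: "1 \<in> idx n" and w: "row_vec n w" and v: "row_vec n v"
  shows "ut_mult (row_mat n w) (row_mat n v) = row_mat n (\<lambda>b. w b + v b)"
proof (rule ext, rule ext)
  fix a b
  have "ut_mult (row_mat n w) (row_mat n v) a b = row_mat n v a b + (if a = 1 then vec_mat w (row_mat n v) b else 0)"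
    by (rule row_mat_ut_mult[OF row_mat_UT[OF one v] w])
  also have "vec_mat w (row_mat n v) b = w b"
    using vec_mat_row_mat[OF v row_vec_idx[OF w]] row_vec_0_1[OF w] by simp
  finally show "ut_mult (row_mat n w) (row_mat n v) a b = row_mat n (\<lambda>b. w b + v b) a b"
    by (simp add: row_mat_def)
qed

lemma col_mat_mult:
  assumes q: "q \<in> idx n" and u: "col_vec q u" and v: "col_vec q v"
  shows "ut_mult (col_mat n q u) (col_mat n q v) = col_mat n q (\<lambda>a. u a + v a)"
proof (rule ext, rule ext)
  fix a b
  have "ut_mult (col_mat n q u) (col_mat n q v) a b = col_mat n q v a b + u a * col_mat n q v q b"
    by (rule col_mat_ut_mult[OF col_mat_UT[OF q v] u])
  also have "col_mat n q v q b = (if b = q then 1 else 0)"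
    using q col_vec_beyond[OF v, of q] by (auto simp: col_mat_def ut_one_def)
  finally show "ut_mult (col_mat n q u) (col_mat n q v) a b = col_mat n q (\<lambda>a. u a + v a) a b"
    by (simp add: col_mat_def)
qed

lemma row_mat_of_trivial_rows:
  assumes Z: "Z \<in> UT n" and one: "1 \<in> idx n" and r: "\<And>i b. 2 \<le> i \<Longrightarrow> Z i b = ut_one n i b"
  shows "Z = row_mat n (\<lambda>b. if 2 \<le> b then Z 1 b else 0)" "row_vec n (\<lambda>b. if 2 \<le> b then Z 1 b else 0)"
proof -
  show "Z = row_mat n (\<lambda>b. if 2 \<le> b then Z 1 b else 0)"
  proof (rule ext, rule ext)
    fix a b
    show "Z a b = row_mat n (\<lambda>b. if 2 \<le> b then Z 1 b else 0) a b"
    proof (cases "a = 1")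
      case True
      then show ?thesis using Z one
        by (cases "b = 0"; cases "b = 1") (auto simp: row_mat_def ut_one_def UT_col_0 UT_diag)
    next
      case False
      then show ?thesis
      proof (cases "a = 0")
        case True then show ?thesis using Z by (simp add: row_mat_def ut_one_def UT_row_0)
      next
        case False then have "2 \<le> a" using \<open>a \<noteq> 1\<close> by simp
        then show ?thesis using r \<open>a \<noteq> 1\<close> by (simp add: row_mat_def)
      qed
    qed
  qed
  show "row_vec n (\<lambda>b. if 2 \<le> b then Z 1 b else 0)"
    unfolding row_vec_def using UT_nonzeroD(2)[OF Z] by auto
qed

section \<open>Commutators with row, column and elementary matrices\<close>

lemma ut_comm_row_mat_eq_iff:
  assumes g: "g \<in> UT n" and one: "1 \<in> idx n" and v: "row_vec n v" and w: "row_vec n w"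
  shows "ut_comm n g (row_mat n v) = row_mat n w \<longleftrightarrow> (\<forall>b. vec_mat (\<lambda>k. w k + v k) g b = v b)"
proof -
  have wv: "row_vec n (\<lambda>k. w k + v k)" by (rule row_vec_add[OF w v])
  have "ut_comm n g (row_mat n v) = row_mat n w \<longleftrightarrow>
      ut_mult g (row_mat n v) = ut_mult (row_mat n (\<lambda>k. w k + v k)) g"
    by (simp add: ut_comm_eq_iff[OF g row_mat_UT[OF one v] row_mat_UT[OF one w]] row_mat_mult[OF one w v])
  also have "\<dots> \<longleftrightarrow> (\<forall>b. vec_mat (\<lambda>k. w k + v k) g b = v b)"
  proof
    assume h: "ut_mult g (row_mat n v) = ut_mult (row_mat n (\<lambda>k. w k + v k)) g"
    show "\<forall>b. vec_mat (\<lambda>k. w k + v k) g b = v b"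
    proof
      fix b
      have "ut_mult g (row_mat n v) 1 b = ut_mult (row_mat n (\<lambda>k. w k + v k)) g 1 b" using h by simp
      then show "vec_mat (\<lambda>k. w k + v k) g b = v b"
        by (simp add: ut_mult_row_mat[OF g one v] row_mat_ut_mult[OF g wv])
    qed
  next
    assume h: "\<forall>b. vec_mat (\<lambda>k. w k + v k) g b = v b"
    show "ut_mult g (row_mat n v) = ut_mult (row_mat n (\<lambda>k. w k + v k)) g"
      by (rule ext, rule ext) (simp add: ut_mult_row_mat[OF g one v] row_mat_ut_mult[OF g wv] h)
  qed
  finally show ?thesis .
qed

lemma ut_comm_col_mat_eq_iff:
  assumes g: "g \<in> UT n" and q: "q \<in> idx n" and gq: "\<And>b. b \<noteq> q \<Longrightarrow> g q b = 0"
    and v: "col_vec q v" and u: "col_vec q u"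
  shows "ut_comm n g (col_mat n q v) = col_mat n q u \<longleftrightarrow> (\<forall>a. mat_vec q g v a = u a + v a)"
proof -
  have uv: "col_vec q (\<lambda>k. u k + v k)" by (rule col_vec_add[OF u v])
  have gqb: "g q b = (if b = q then 1 else 0)" for b using gq g q by (auto simp: UT_diag)
  have "ut_comm n g (col_mat n q v) = col_mat n q u \<longleftrightarrow>
      ut_mult g (col_mat n q v) = ut_mult (col_mat n q (\<lambda>k. u k + v k)) g"
    by (simp add: ut_comm_eq_iff[OF g col_mat_UT[OF q v] col_mat_UT[OF q u]] col_mat_mult[OF q u v])
  also have "\<dots> \<longleftrightarrow> (\<forall>a. mat_vec q g v a = u a + v a)"
  proof
    assume h: "ut_mult g (col_mat n q v) = ut_mult (col_mat n q (\<lambda>k. u k + v k)) g"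
    show "\<forall>a. mat_vec q g v a = u a + v a"
    proof
      fix a
      have "ut_mult g (col_mat n q v) a q = ut_mult (col_mat n q (\<lambda>k. u k + v k)) g a q" using h by simp
      then show "mat_vec q g v a = u a + v a"
        by (simp add: ut_mult_col_mat[OF g v] col_mat_ut_mult[OF g uv] gqb)
    qed
  next
    assume h: "\<forall>a. mat_vec q g v a = u a + v a"
    show "ut_mult g (col_mat n q v) = ut_mult (col_mat n q (\<lambda>k. u k + v k)) g"
      by (rule ext, rule ext) (simp add: ut_mult_col_mat[OF g v] col_mat_ut_mult[OF g uv] h gqb)
  qed
  finally show ?thesis .
qed

lemma ut_comm_transv_1_eq_one_iff:
  assumes y: "y \<in> UT n" and one: "1 \<in> idx n" and m: "2 \<le> m" "m \<in> idx n"
  shows "ut_comm n y (transv n 1 m 1) = ut_one n \<longleftrightarrow> (\<forall>b. b \<noteq> m \<longrightarrow> y m b = 0)"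
proof -
  have t: "transv n 1 m 1 = row_mat n (\<lambda>b. if b = m then 1 else 0)"
    using m by (intro transv_eq_row_mat) auto
  have "ut_comm n y (transv n 1 m 1) = ut_one n \<longleftrightarrow>
      (\<forall>b. vec_mat (\<lambda>k. 0 + (if k = m then 1 else 0)) y b = (if b = m then 1 else 0))"
    unfolding t using ut_comm_row_mat_eq_iff[OF y one row_vec_delta[OF m(2,1)] row_vec_zero] by (simp add: row_mat_zero)
  also have "\<dots> \<longleftrightarrow> (\<forall>b. y m b = (if b = m then 1 else 0))"
    using vec_mat_delta[OF UT_upper_triangular[OF y], of m 1] by simp
  also have "\<dots> \<longleftrightarrow> (\<forall>b. b \<noteq> m \<longrightarrow> y m b = 0)"
    using UT_diag[OF y m(2)] by auto
  finally show ?thesis .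
qed

lemma ut_comm_transv_succ_row_mat:
  assumes s: "2 \<le> s" "Suc s \<in> idx n" and v: "row_vec n v"
  shows "ut_comm n (transv n s (Suc s) 1) (row_mat n v) = row_mat n (\<lambda>b. if b = Suc s then - v s else 0)"
proof -
  have idx: "s \<in> idx n" "1 \<in> idx n" using idx_downward_closed[OF s(2)] s by auto
  let ?w = "\<lambda>b. if b = Suc s then - v s else 0"
  have w: "row_vec n ?w" using s by (intro row_vec_delta) auto
  have wv: "\<And>k. ?w k + v k \<noteq> 0 \<Longrightarrow> k \<in> idx n"
    using row_vec_add[OF w v] row_vec_idx by blast
  show ?thesis
  proof (subst ut_comm_row_mat_eq_iff[OF transv_UT[OF idx(1) s(2) lessI] idx(2) v w], intro allI)
    fix b
    show "vec_mat (\<lambda>k. ?w k + v k) (transv n s (Suc s) 1) b = v b"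
      by (subst vec_mat_transv[OF wv lessI]) auto
  qed
qed

lemma ut_mult_cancel_row_prefix:
  assumes a: "a \<in> UT n" and Z: "Z \<in> UT n"
    and h: "\<And>c. c < l \<Longrightarrow> ut_mult Z a i c = a i c" and k: "k < l"
  shows "Z i k = ut_one n i k"
proof -
  let ?x = "\<lambda>k. Z i k - ut_one n i k"
  have x: "?x k \<noteq> 0 \<Longrightarrow> k \<in> idx n" for k
    using UT_nonzeroD(2)[OF Z, of i k] by (auto simp: ut_one_def split: if_splits)
  have "vec_mat ?x a c = 0" if "c < l" for c
  proof -
    have "vec_mat ?x a c = ut_mult Z a i c - ut_mult (ut_one n) a i c"
      by (simp only: vec_mat_diff ut_mult_eq_vec_mat UT_upper_triangular[OF Z]
          UT_upper_triangular[OF ut_one_UT] UT_upper_triangular[OF a])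
    then show ?thesis using h[OF that] a by (simp add: ut_mult_one_left)
  qed
  then show ?thesis
    using vec_mat_eq_0_imp_eq_0[OF a, of ?x l k] x k by auto
qed

text \<open>If right multiplication by \<open>t\<close> leaves the entries \<open>(i, c)\<close>, \<open>c < l\<close>, of every matrix unchanged,
  then \<open>[a, t]\<close> agrees with \<open>e\<close> at these entries: compare row \<open>i\<close> of both sides of \<open>a t = [a, t] t a\<close>.\<close>
lemma ut_comm_eq_one_entry:
  assumes a: "a \<in> UT n" and t: "t \<in> UT n"
    and t_id: "\<And>X c. X \<in> UT n \<Longrightarrow> c < l \<Longrightarrow> ut_mult X t i c = X i c" and k: "k < l"
  shows "ut_comm n a t i k = ut_one n i k"
proof -
  let ?Z = "ut_comm n a t"
  have Z: "?Z \<in> UT n" by (rule ut_comm_UT[OF a t])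
  have eq: "ut_mult a t = ut_mult (ut_mult ?Z t) a" using ut_comm_eq_iff[OF a t Z] by simp
  have "ut_mult ?Z a i c = a i c" if c: "c < l" for c
  proof -
    have "a i c = ut_mult (ut_mult ?Z t) a i c" using t_id[OF a c] eq by metis
    also have "\<dots> = vec_mat (\<lambda>k. ut_mult ?Z t i k) a c"
      by (rule ut_mult_eq_vec_mat[OF UT_upper_triangular[OF ut_mult_UT[OF Z t]] UT_upper_triangular[OF a]])
    also have "\<dots> = vec_mat (\<lambda>k. ?Z i k) a c"
      unfolding vec_mat_def using c by (intro sum.cong) (auto simp: t_id[OF Z])
    also have "\<dots> = ut_mult ?Z a i c"
      by (rule ut_mult_eq_vec_mat[OF UT_upper_triangular[OF Z] UT_upper_triangular[OF a], symmetric])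
    finally show ?thesis by simp
  qed
  then show ?thesis using ut_mult_cancel_row_prefix[OF a Z _ k] by blast
qed

lemma ut_comm_transv_1_lower_rows:
  assumes a: "a \<in> UT n" and m: "2 \<le> m" "m \<in> idx n" and i: "2 \<le> i"
  shows "ut_comm n a (transv n 1 m 1) i k = ut_one n i k"
proof (rule ut_comm_eq_one_entry[OF a _ _ lessI])
  show "transv n 1 m 1 \<in> UT n"
    using m idx_downward_closed[OF m(2), of 1] by (intro transv_UT) auto
  show "ut_mult X (transv n 1 m 1) i c = X i c" if "X \<in> UT n" for X c
    using m i by (simp add: ut_mult_transv[OF that] UT_col_1[OF that, unfolded One_nat_def])
qed

lemma ut_comm_transv_succ_lower_rows:
  assumes g: "g \<in> UT n" and m: "1 \<le> m" "Suc m \<in> idx n" and i: "m < i"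
  shows "ut_comm n g (transv n m (Suc m) 1) i k = ut_one n i k"
proof (rule ut_comm_eq_one_entry[OF g _ _ lessI])
  show "transv n m (Suc m) 1 \<in> UT n"
    using m idx_downward_closed[OF m(2), of m] by (intro transv_UT) auto
  show "ut_mult X (transv n m (Suc m) 1) i c = X i c" if "X \<in> UT n" for X c
    using m i by (simp add: ut_mult_transv[OF that] UT_below_diag[OF that])
qed

lemma ut_comm_transv_succ_left_cols:
  assumes g: "g \<in> UT n" and m: "1 \<le> m" "Suc m \<in> idx n" and k: "k \<le> m"
  shows "ut_comm n g (transv n m (Suc m) 1) i k = ut_one n i k"
proof (rule ut_comm_eq_one_entry[OF g])
  show "transv n m (Suc m) 1 \<in> UT n"
    using m idx_downward_closed[OF m(2), of m] by (intro transv_UT) auto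
  show "ut_mult X (transv n m (Suc m) 1) i c = X i c" if "X \<in> UT n" "c < Suc m" for X c
    using m that(2) by (simp add: ut_mult_transv[OF that(1)])
qed (use k in simp)

text \<open>Entry \<open>(1, m + 1)\<close> of \<open>g t = [g, t] t g\<close> for \<open>t = t\<^sub>m\<^sub>,\<^sub>m\<^sub>+\<^sub>1(1)\<close>.\<close>
lemma ut_comm_transv_succ_corner:
  assumes g: "g \<in> UT n" and m: "2 \<le> m" "Suc m \<in> idx n"
  shows "ut_comm n g (transv n m (Suc m) 1) 1 (Suc m) = g 1 m"
proof -
  let ?t = "transv n m (Suc m) (1::'a)"
  let ?Z = "ut_comm n g ?t"
  have t: "?t \<in> UT n" using m idx_downward_closed[OF m(2), of m] by (intro transv_UT) auto
  have Z: "?Z \<in> UT n" by (rule ut_comm_UT[OF g t])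
  have Zt: "ut_mult h ?t i c = h i c + (if c = Suc m then h i m else 0)" if "h \<in> UT n" for h i c
    using m by (simp add: ut_mult_transv[OF that])
  have Z_left: "?Z 1 k = ut_one n 1 k" if "k \<le> m" for k
    using ut_comm_transv_succ_left_cols[OF g _ m(2) that] m by simp
  have "g 1 (Suc m) + g 1 m = ut_mult g ?t 1 (Suc m)" by (simp add: Zt[OF g])
  also have "\<dots> = ut_mult (ut_mult ?Z ?t) g 1 (Suc m)"
    using ut_comm_eq_iff[OF g t Z] by simp
  also have "\<dots> = (\<Sum>k\<in>{..Suc m}. ut_mult ?Z ?t 1 k * g k (Suc m))"
    by (rule ut_mult_eq_sum[OF UT_upper_triangular[OF ut_mult_UT[OF Z t]] UT_upper_triangular[OF g]]) auto
  also have "\<dots> = ut_mult ?Z ?t 1 (Suc m) * g (Suc m) (Suc m)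
      + (\<Sum>k\<in>{..m}. ut_mult ?Z ?t 1 k * g k (Suc m))"
    by simp
  also have "ut_mult ?Z ?t 1 (Suc m) = ?Z 1 (Suc m)"
    using Zt[OF Z] Z_left[of m] m by (simp add: ut_one_def)
  also have "(\<Sum>k\<in>{..m}. ut_mult ?Z ?t 1 k * g k (Suc m)) = (\<Sum>k\<in>{..m}. ut_one n 1 k * g k (Suc m))"
    by (rule sum.cong) (use Zt[OF Z] Z_left in auto)
  also have "\<dots> = g 1 (Suc m)"
    using m by (intro sum_ut_one_mult[OF g]) auto
  also have "g (Suc m) (Suc m) = 1" by (rule UT_diag[OF g m(2)])
  finally show ?thesis by simp
qed

lemma col_mat_transv_commute:
  assumes q: "q \<in> idx n" and v: "col_vec q v" and s: "s \<in> idx n" "r \<in> idx n" "s < r" "s \<noteq> q"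
    and vr: "v r = 0"
  shows "ut_mult (col_mat n q v) (transv n s r 1) = ut_mult (transv n s r 1) (col_mat n q v)"
proof (intro ext)
  fix a c
  have K: "col_mat n q v \<in> UT n" by (rule col_mat_UT[OF q v])
  have s1: "1 \<le> s" using s by (simp add: idx_def)
  show "ut_mult (col_mat n q v) (transv n s r 1) a c = ut_mult (transv n s r 1) (col_mat n q v) a c"
    unfolding ut_mult_transv[OF K s1 s(3)] transv_ut_mult[OF K s1 s(3)]
    using s vr by (auto simp: col_mat_def ut_one_def)
qed

text \<open>The rows \<open>2, \<dots>, N\<close> of the inverse of \<open>e + \<Sum>\<^sub>m\<^sub>=\<^sub>2\<^sup>N\<^sup>-\<^sup>1 e\<^sub>m\<^sub>,\<^sub>m\<^sub>+\<^sub>1\<close>. A matrix \<open>G\<close> with these rows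
  shifts row matrices under commutation, see \<open>inverse_shift_rows_comm_row_mat\<close>.\<close>
definition inverse_shift_rows :: "nat \<Rightarrow> ('a::field) mat \<Rightarrow> bool" where
  "inverse_shift_rows N G \<longleftrightarrow> (\<forall>m b. 2 \<le> m \<longrightarrow> m \<le> N \<longrightarrow>
     G m b + (if m < N then G (Suc m) b else 0) = (if b = m then 1 else 0))"

definition inverse_shift_mat :: "nat \<Rightarrow> ('a::field) mat" where
  "inverse_shift_mat N a b = (if a = b \<and> 1 \<le> a \<and> a \<le> N then 1
     else if 2 \<le> a \<and> a < b \<and> b \<le> N then (-1) ^ (b - a) else 0)"

lemma inverse_shift_mat_UT: "inverse_shift_mat N \<in> UT (enat N)"
  by (rule UT_I) (auto simp: inverse_shift_mat_def idx_enat split: if_splits)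

lemma inverse_shift_rows_inverse_shift_mat: "inverse_shift_rows N (inverse_shift_mat N)"
  unfolding inverse_shift_rows_def
proof (intro allI impI)
  fix m b :: nat assume m: "2 \<le> m" "m \<le> N"
  consider "b \<le> Suc m" | "Suc m < b" "b \<le> N" | "N < b" by linarith
  then show "inverse_shift_mat N m b + (if m < N then inverse_shift_mat N (Suc m) b else 0)
      = (if b = m then (1::'a) else 0)"
  proof cases
    case 2
    then have "b - m = Suc (b - Suc m)" by simp
    then show ?thesis using 2 m by (auto simp: inverse_shift_mat_def)
  qed (use m in \<open>auto simp: inverse_shift_mat_def\<close>)
qed

lemma inverse_shift_rows_iff_comm_transv:
  assumes G: "G \<in> UT (enat N)"
  shows "inverse_shift_rows N G \<longleftrightarrow> (\<forall>m. 2 \<le> m \<longrightarrow> m \<le> N \<longrightarrow>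
    ut_comm (enat N) G (transv (enat N) 1 m 1)
      = row_mat (enat N) (\<lambda>b. if b = Suc m \<and> m < N then 1 else 0))"
proof -
  have "ut_comm (enat N) G (transv (enat N) 1 m 1) = row_mat (enat N) (\<lambda>b. if b = Suc m \<and> m < N then 1 else 0)
      \<longleftrightarrow> (\<forall>b. G m b + (if m < N then G (Suc m) b else 0) = (if b = m then 1 else 0))"
    if m: "2 \<le> m" "m \<le> N" for m
  proof -
    have idx: "m \<in> idx (enat N)" "1 \<in> idx (enat N)" using m by (auto simp: idx_enat)
    have v: "row_vec (enat N) (\<lambda>b. if b = m then (1::'a) else 0)" by (rule row_vec_delta[OF idx(1) m(1)])
    have w: "row_vec (enat N) (\<lambda>b. if b = Suc m \<and> m < N then (1::'a) else 0)"
      using m by (auto simp: row_vec_def idx_enat)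
    have t: "transv (enat N) 1 m 1 = row_mat (enat N) (\<lambda>b. if b = m then 1 else 0)"
      using m by (intro transv_eq_row_mat) auto
    have "vec_mat (\<lambda>k. (if k = Suc m \<and> m < N then 1 else 0) + (if k = m then 1 else 0)) G b
        = vec_mat (\<lambda>k. if k = Suc m then (if m < N then 1 else 0) else 0) G b
          + vec_mat (\<lambda>k. if k = m then 1 else 0) G b" for b
      by (subst vec_mat_add[symmetric]) (rule arg_cong[where f="\<lambda>x. vec_mat x G b"], auto)
    also have "\<dots> b = G m b + (if m < N then G (Suc m) b else 0)" for b
      by (simp add: vec_mat_delta[OF UT_upper_triangular[OF G]])
    finally show ?thesis
      unfolding t ut_comm_row_mat_eq_iff[OF G idx(2) v w] by simp
  qed
  then show ?thesis unfolding inverse_shift_rows_def by auto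
qed

lemma inverse_shift_rows_comm_row_mat:
  fixes G :: "('a::field) mat"
  assumes G: "G \<in> UT (enat N)" "inverse_shift_rows N G" and N: "1 \<le> N"
    and v: "row_vec (enat N) v" and w: "row_vec (enat N) w"
    and shift: "\<And>k. w (Suc k) = (if k < N then v k else 0)"
  shows "ut_comm (enat N) G (row_mat (enat N) v) = row_mat (enat N) w"
proof -
  have shifted_sum: "(\<Sum>k\<in>{..b}. w k * G k b) = (\<Sum>k\<in>{..b}. v k * (if k < N then G (Suc k) b else 0))"
    for b
  proof -
    have "(\<Sum>k\<in>{..b}. w k * G k b) = (\<Sum>k<b. w (Suc k) * G (Suc k) b)"
      by (simp only: lessThan_Suc_atMost[symmetric] sum.lessThan_Suc_shift) (simp add: row_vec_0_1[OF w])
    also have "\<dots> = (\<Sum>k<b. v k * (if k < N then G (Suc k) b else 0))"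
      by (intro sum.cong) (auto simp: shift)
    also have "\<dots> = (\<Sum>k\<in>{..b}. v k * (if k < N then G (Suc k) b else 0))"
      by (simp add: lessThan_Suc_atMost[symmetric] UT_below_diag[OF G(1)])
    finally show ?thesis .
  qed
  have "vec_mat (\<lambda>k. w k + v k) G b = v b" for b
  proof -
    have "vec_mat (\<lambda>k. w k + v k) G b
        = (\<Sum>k\<in>{..b}. v k * (G k b + (if k < N then G (Suc k) b else 0)))"
      by (simp add: vec_mat_def shifted_sum distrib_left distrib_right sum.distrib)
    also have "\<dots> = (\<Sum>k\<in>{..b}. v k * (if b = k then 1 else 0))"
    proof (rule sum.cong[OF refl])
      fix k
      show "v k * (G k b + (if k < N then G (Suc k) b else 0)) = v k * (if b = k then 1 else 0)"
        using G(2) row_vecD[OF v, of k] by (cases "v k = 0") (auto simp: inverse_shift_rows_def idx_enat)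
    qed
    also have "\<dots> = v b" by (simp add: if_distrib[of "(*) _"] sum.delta cong: if_cong)
    finally show ?thesis .
  qed
  then show ?thesis
    using ut_comm_row_mat_eq_iff[OF G(1) _ v w] N by (simp add: idx_enat)
qed

text \<open>Commutation with \<open>shift_mat n q\<close> moves the entries of column matrices \<open>col_mat n q v\<close> up by
  one row, see \<open>mat_vec_shift_mat\<close>.\<close>
definition shift_mat :: "enat \<Rightarrow> nat \<Rightarrow> ('a::field) mat" where
  "shift_mat n q a b = ut_one n a b + (if 1 \<le> a \<and> Suc a < q \<and> b = Suc a then 1 else 0)"

lemma shift_mat_UT:
  assumes q: "q \<in> idx n" shows "(shift_mat n q :: ('a::field) mat) \<in> UT n"
proof (rule UT_I)
  fix i j assume h: "(shift_mat n q i j :: 'a) \<noteq> 0"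
  show "i \<in> idx n \<and> j \<in> idx n \<and> i \<le> j"
  proof (cases "1 \<le> i \<and> Suc i < q \<and> j = Suc i")
    case True then show ?thesis using idx_downward_closed[OF q, of i] idx_downward_closed[OF q, of j] by auto
  next
    case False
    then have "(shift_mat n q i j :: 'a) = ut_one n i j" by (simp add: shift_mat_def)
    then have "(ut_one n i j :: 'a) \<noteq> 0" using h by metis
    then show ?thesis by (auto simp: ut_one_def split: if_splits)
  qed
next
  fix i assume "i \<in> idx n" then show "shift_mat n q i i = 1" by (simp add: shift_mat_def ut_one_def)
qed

lemma shift_mat_row: "b \<noteq> q \<Longrightarrow> shift_mat n q q b = 0"
  by (simp add: shift_mat_def ut_one_def)

lemma mat_vec_shift_mat:
  fixes v :: "nat \<Rightarrow> 'a::field"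
  assumes q: "q \<in> idx n" and v: "col_vec q v"
  shows "mat_vec q (shift_mat n q) v a = v a + (if 1 \<le> a \<and> Suc a < q then v (Suc a) else 0)"
proof -
  have "mat_vec q (shift_mat n q) v a = (\<Sum>k\<in>{..q}. ut_one n a k * v k + (if k = Suc a then (if 1 \<le> a \<and> Suc a < q then v k else 0) else 0))"
    unfolding mat_vec_def shift_mat_def by (rule sum.cong[OF refl]) (auto simp: distrib_right)
  also have "\<dots> = (\<Sum>k\<in>{..q}. ut_one n a k * v k) + (\<Sum>k\<in>{..q}. if k = Suc a then (if 1 \<le> a \<and> Suc a < q then v k else 0) else 0)"
    by (simp add: sum.distrib)
  also have "(\<Sum>k\<in>{..q}. ut_one n a k * v k) = v a"
  proof (cases "v a = 0")
    case True
    then show ?thesis by (simp, intro sum.neutral) (auto simp: ut_one_def True)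
  next
    case False
    then have a: "1 \<le> a" "a < q" using col_vecD[OF v] by auto
    then have "a \<in> idx n" using idx_downward_closed[OF q] by auto
    then show ?thesis using a by (subst sum_eq_single[where m=a]) (auto simp: ut_one_def)
  qed
  also have "(\<Sum>k\<in>{..q}. if k = Suc a then (if 1 \<le> a \<and> Suc a < q then v k else 0) else 0)
      = (if 1 \<le> a \<and> Suc a < q then v (Suc a) else 0)"
    by (simp add: sum.delta)
  finally show ?thesis .
qed

section \<open>The center\<close>

lemma ut_one_center: "ut_one n \<in> ut_center n"
  unfolding ut_center_def using ut_one_UT ut_mult_one_left ut_mult_one_right by fastforce

lemma UT_last_row:
  assumes x: "x \<in> UT (enat N)" "1 \<le> N"
  shows "x N c = (if c = N then 1 else 0)"
  using UT_diag[OF x(1), of N] UT_nonzeroD[OF x(1), of N c] x(2)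
  by (cases "x N c = 0") (auto simp: idx_enat)

lemma ut_mult_transv_1_last:
  assumes x: "x \<in> UT (enat N)" and N: "2 \<le> N"
  shows "ut_mult x (transv (enat N) 1 N \<gamma>) i c = x i c + (if i = 1 \<and> c = N then \<gamma> else 0)"
  using N UT_col_1[OF x, of i] UT_diag[OF x, of 1]
  by (auto simp: ut_mult_transv[OF x] idx_enat)

lemma transv_1_last_center:
  assumes N: "2 \<le> N"
  shows "transv (enat N) 1 N \<gamma> \<in> ut_center (enat N)"
proof -
  have "ut_mult (transv (enat N) 1 N \<gamma>) x i c = ut_mult x (transv (enat N) 1 N \<gamma>) i c"
    if x: "x \<in> UT (enat N)" for x i c
  proof -
    have "ut_mult (transv (enat N) 1 N \<gamma>) x i c = x i c + (if i = 1 then \<gamma> * x N c else 0)"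
      using N by (intro transv_ut_mult[OF x]) auto
    also have "\<dots> = ut_mult x (transv (enat N) 1 N \<gamma>) i c"
      unfolding ut_mult_transv_1_last[OF x N] using N by (simp add: UT_last_row[OF x])
    finally show ?thesis .
  qed
  then show ?thesis
    unfolding ut_center_def using N by (auto intro!: ext transv_UT simp: idx_enat)
qed

section \<open>Almost identity PC-maps\<close>

locale almost_identity_PC =
  fixes n :: enat and \<phi> :: "('a::field) mat \<Rightarrow> 'a mat"
  assumes n_ge_1: "1 \<le> n" and PC: "PC_map n \<phi>" and almost_id: "almost_identity n \<phi>"
begin

lemma one_in_idx: "1 \<in> idx n"
  using n_ge_1 one_in_idx_iff by blast

lemma phi_UT: "x \<in> UT n \<Longrightarrow> \<phi> x \<in> UT n"
  using PC unfolding PC_map_def bij_betw_def by blast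

lemma phi_comm: "x \<in> UT n \<Longrightarrow> y \<in> UT n \<Longrightarrow> \<phi> (ut_comm n x y) = ut_comm n (\<phi> x) (\<phi> y)"
  using PC unfolding PC_map_def by blast

lemma phi_transv: "i \<in> idx n \<Longrightarrow> j \<in> idx n \<Longrightarrow> i < j \<Longrightarrow> \<phi> (transv n i j \<alpha>) = transv n i j \<alpha>"
  using almost_id unfolding almost_identity_def by blast

lemma phi_one: "\<phi> (ut_one n) = ut_one n"
  using phi_comm[OF ut_one_UT ut_one_UT] by (simp add: ut_comm_self ut_one_UT phi_UT)

lemma phi_comm_transv:
  assumes "x \<in> UT n" "i \<in> idx n" "j \<in> idx n" "i < j"
  shows "\<phi> (ut_comm n x (transv n i j \<alpha>)) = ut_comm n (\<phi> x) (transv n i j \<alpha>)"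
    and "\<phi> (ut_comm n (transv n i j \<alpha>) x) = ut_comm n (transv n i j \<alpha>) (\<phi> x)"
  using assms by (simp_all add: phi_comm transv_UT phi_transv)

lemma phi_comm_transv_eq_one:
  assumes "x \<in> UT n" "i \<in> idx n" "j \<in> idx n" "i < j" "ut_comm n x (transv n i j \<alpha>) = ut_one n"
  shows "ut_comm n (\<phi> x) (transv n i j \<alpha>) = ut_one n"
proof -
  have "ut_comm n (\<phi> x) (transv n i j \<alpha>) = \<phi> (ut_comm n x (transv n i j \<alpha>))"
    using phi_comm_transv(1)[OF assms(1-4)] by simp
  also have "\<dots> = ut_one n" using assms(5) phi_one by simp
  finally show ?thesis .
qed

lemma phi_row_mat_delta:
  assumes "q \<in> idx n" "2 \<le> q"
  shows "\<phi> (row_mat n (\<lambda>b. if b = q then \<beta> else 0)) = row_mat n (\<lambda>b. if b = q then \<beta> else 0)"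
proof -
  have "transv n 1 q \<beta> = row_mat n (\<lambda>b. if b = q then \<beta> else 0)"
    using assms by (intro transv_eq_row_mat) auto
  then show ?thesis using assms phi_transv[OF one_in_idx, of q \<beta>] by simp
qed

lemma phi_col_mat_delta:
  assumes "q \<in> idx n" "1 \<le> s" "s < q"
  shows "\<phi> (col_mat n q (\<lambda>a. if a = s then \<beta> else 0)) = col_mat n q (\<lambda>a. if a = s then \<beta> else 0)"
proof -
  have "transv n s q \<beta> = col_mat n q (\<lambda>a. if a = s then \<beta> else 0)"
    using assms by (intro transv_eq_col_mat) auto
  then show ?thesis using assms phi_transv[of s q \<beta>] idx_downward_closed[of q n s] by simp
qed

lemma phi_row_1_low:
  assumes a: "a \<in> UT n" and b: "b \<le> 1"
  shows "\<phi> a 1 b = a 1 b"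
  using UT_col_0[OF a] UT_col_0[OF phi_UT[OF a]] UT_diag[OF a one_in_idx] UT_diag[OF phi_UT[OF a] one_in_idx] b
  by (auto simp: le_Suc_eq)

lemma phi_row_mat:
  assumes v: "row_vec n v"
  obtains v' where "row_vec n v'" "\<phi> (row_mat n v) = row_mat n v'"
    "\<And>s. 2 \<le> s \<Longrightarrow> Suc s \<in> idx n \<Longrightarrow> v' s = v s"
proof -
  let ?x = "row_mat n v"
  have x: "?x \<in> UT n" by (rule row_mat_UT[OF one_in_idx v])
  have y: "\<phi> ?x \<in> UT n" by (rule phi_UT[OF x])
  have rows: "\<phi> ?x i b = ut_one n i b" if "2 \<le> i" for i b
  proof (cases "i \<in> idx n \<and> b \<noteq> i")
    case True
    then have i: "2 \<le> i" "i \<in> idx n" using that by auto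
    have "ut_comm n ?x (transv n 1 i 1) = ut_one n"
      using i unfolding ut_comm_transv_1_eq_one_iff[OF x one_in_idx i] by (simp add: row_mat_def ut_one_def)
    then have "ut_comm n (\<phi> ?x) (transv n 1 i 1) = ut_one n"
      using i one_in_idx by (intro phi_comm_transv_eq_one[OF x]) auto
    then have "\<forall>b. b \<noteq> i \<longrightarrow> \<phi> ?x i b = 0"
      using ut_comm_transv_1_eq_one_iff[OF y one_in_idx i] by blast
    then show ?thesis using True by (simp add: ut_one_def)
  next
    case False
    then show ?thesis using UT_diag[OF y, of i] UT_row_outside[OF y, of i b] by (auto simp: ut_one_def)
  qed
  define v' where "v' = (\<lambda>b. if 2 \<le> b then \<phi> ?x 1 b else 0)"
  have y_eq: "\<phi> ?x = row_mat n v'" and v': "row_vec n v'"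
    using row_mat_of_trivial_rows[OF y one_in_idx rows] unfolding v'_def by auto
  have "v' s = v s" if s: "2 \<le> s" "Suc s \<in> idx n" for s
  proof -
    have sidx: "s \<in> idx n" using idx_downward_closed[OF s(2), of s] s by auto
    have "row_mat n (\<lambda>b. if b = Suc s then - v s else 0) = \<phi> (ut_comm n (transv n s (Suc s) 1) ?x)"
      using ut_comm_transv_succ_row_mat[OF s v] phi_row_mat_delta[of "Suc s" "- v s"] s by simp
    also have "\<dots> = row_mat n (\<lambda>b. if b = Suc s then - v' s else 0)"
      using phi_comm_transv(2)[OF x sidx s(2)] y_eq ut_comm_transv_succ_row_mat[OF s v'] by simp
    finally have "(\<lambda>b. if b = Suc s then - v s else 0) = (\<lambda>b. if b = Suc s then - v' s else (0::'a))"
      by (rule row_mat_inject)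
    then show ?thesis by (metis neg_equal_iff_equal)
  qed
  with v' y_eq show ?thesis by (rule that)
qed

lemma phi_inverse_shift_rows:
  assumes nN: "n = enat N"
  shows "inverse_shift_rows N (\<phi> (inverse_shift_mat N))"
proof -
  let ?G = "inverse_shift_mat N :: 'a mat"
  have G: "?G \<in> UT n" using inverse_shift_mat_UT nN by simp
  have "ut_comm n (\<phi> ?G) (transv n 1 m 1) = row_mat n (\<lambda>b. if b = Suc m \<and> m < N then 1 else 0)"
    if m: "2 \<le> m" "m \<le> N" for m
  proof -
    have midx: "m \<in> idx n" using m nN by (simp add: idx_enat)
    have "\<phi> (row_mat n (\<lambda>b. if b = Suc m \<and> m < N then 1 else 0))
        = row_mat n (\<lambda>b. if b = Suc m \<and> m < N then 1 else 0)"
    proof (cases "m < N")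
      case True
      then show ?thesis using phi_row_mat_delta[of "Suc m" 1] m nN by (simp add: idx_enat)
    qed (simp add: row_mat_zero phi_one)
    moreover have "ut_comm n ?G (transv n 1 m 1) = row_mat n (\<lambda>b. if b = Suc m \<and> m < N then 1 else 0)"
      using inverse_shift_rows_iff_comm_transv[OF inverse_shift_mat_UT, of N]
        inverse_shift_rows_inverse_shift_mat m nN by blast
    moreover have "ut_comm n (\<phi> ?G) (transv n 1 m 1) = \<phi> (ut_comm n ?G (transv n 1 m 1))"
      using phi_comm_transv(1)[OF G one_in_idx midx] m by simp
    ultimately show ?thesis by simp
  qed
  moreover have "\<phi> ?G \<in> UT (enat N)" using phi_UT[OF G] nN by simp
  ultimately show ?thesis using nN by (simp add: inverse_shift_rows_iff_comm_transv)
qed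

lemma phi_row_mat_fixed_enat:
  assumes nN: "n = enat N" and w: "row_vec n w" and w2: "w 2 = 0"
  shows "\<phi> (row_mat n w) = row_mat n w"
proof -
  have N: "1 \<le> N" using n_ge_1 nN by (simp add: one_enat_def)
  let ?G = "inverse_shift_mat N :: 'a mat"
  have G: "?G \<in> UT n" using inverse_shift_mat_UT nN by simp
  define v where "v = (\<lambda>k. w (Suc k))"
  have v: "row_vec n v" unfolding v_def by (rule row_vec_shift[OF w w2])
  obtain v' where v': "row_vec n v'" "\<phi> (row_mat n v) = row_mat n v'"
    "\<And>s. 2 \<le> s \<Longrightarrow> Suc s \<in> idx n \<Longrightarrow> v' s = v s"
    using phi_row_mat[OF v] by blast
  have w_beyond: "w (Suc k) = 0" if "N \<le> k" for k
    using row_vecD[OF w, of "Suc k"] that nN by (fastforce simp: idx_enat)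
  have v'_v: "v' k = v k" if "k < N" for k
  proof (cases "2 \<le> k")
    case True
    then show ?thesis using v'(3) that nN by (simp add: idx_enat)
  next
    case False
    then show ?thesis using row_vecD[OF v, of k] row_vecD[OF v'(1), of k] by fastforce
  qed
  have shift: "w (Suc k) = (if k < N then v k else 0)"
    and shift': "w (Suc k) = (if k < N then v' k else 0)" for k
    using w_beyond v'_v unfolding v_def by auto
  have vN: "row_vec (enat N) v" "row_vec (enat N) v'" and wN: "row_vec (enat N) w"
    using v v'(1) w nN by simp_all
  have "ut_comm n ?G (row_mat n v) = row_mat n w"
    using inverse_shift_rows_comm_row_mat[OF inverse_shift_mat_UT inverse_shift_rows_inverse_shift_mat N
      vN(1) wN shift] nN by simp
  then have "\<phi> (row_mat n w) = \<phi> (ut_comm n ?G (row_mat n v))" by simp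
  also have "\<dots> = ut_comm n (\<phi> ?G) (row_mat n v')"
    using phi_comm[OF G row_mat_UT[OF one_in_idx v]] v'(2) by simp
  also have "\<dots> = row_mat n w"
    using inverse_shift_rows_comm_row_mat[OF _ phi_inverse_shift_rows[OF nN] N vN(2) wN shift']
      phi_UT[OF G] nN by simp
  finally show ?thesis .
qed

lemma phi_row_mat_fixed:
  assumes w: "row_vec n w" and w2: "w 2 = 0"
  shows "\<phi> (row_mat n w) = row_mat n w"
proof (cases n)
  case (enat N)
  then show ?thesis using phi_row_mat_fixed_enat w w2 by blast
next
  case infinity
  obtain v' where v': "row_vec n v'" "\<phi> (row_mat n w) = row_mat n v'"
    "\<And>s. 2 \<le> s \<Longrightarrow> Suc s \<in> idx n \<Longrightarrow> v' s = w s"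
    using phi_row_mat[OF w] by blast
  have "v' s = w s" for s
  proof (cases "2 \<le> s")
    case False
    then show ?thesis using row_vecD[OF v'(1), of s] row_vecD[OF w, of s] by fastforce
  qed (use v'(3) infinity in \<open>simp add: idx_infinity\<close>)
  then have "v' = w" by (rule ext)
  then show ?thesis using v'(2) by simp
qed

text \<open>The vector \<open>x\<close> is row \<open>m\<close> of \<open>a\<^sup>-\<^sup>1\<close>; it is read off the commutator \<open>[a, t\<^sub>1\<^sub>m(1)]\<close>, a row matrix
  that \<open>\<phi>\<close> fixes, so \<open>x\<close> is also row \<open>m\<close> of \<open>\<phi>(a)\<^sup>-\<^sup>1\<close>.\<close>
lemma phi_lower_row_witness:
  assumes a: "a \<in> UT n" and m: "2 \<le> m" "m \<in> idx n"
  obtains x where "x m = 1" "\<And>k. k < m \<Longrightarrow> x k = 0" "\<And>c. vec_mat x a c = vec_mat x (\<phi> a) c"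
proof -
  let ?t = "transv n 1 m (1::'a)"
  let ?Z = "ut_comm n a ?t"
  let ?e = "\<lambda>b. if b = m then (1::'a) else 0"
  have t: "?t = row_mat n ?e" using m by (intro transv_eq_row_mat) auto
  have e: "row_vec n ?e" by (rule row_vec_delta[OF m(2,1)])
  have Z: "?Z \<in> UT n" by (rule ut_comm_UT[OF a row_mat_UT[OF one_in_idx e, folded t]])
  define w where "w = (\<lambda>b. if 2 \<le> b then ?Z 1 b else 0)"
  have Z_eq: "?Z = row_mat n w" and w: "row_vec n w"
    using row_mat_of_trivial_rows[OF Z one_in_idx ut_comm_transv_1_lower_rows[OF a m]]
    unfolding w_def by auto
  define x where "x = (\<lambda>k. w k + ?e k)"
  have x_idx: "x k \<noteq> 0 \<Longrightarrow> k \<in> idx n" for k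
    using row_vec_idx[OF row_vec_add[OF w e]] unfolding x_def by blast
  have xa: "vec_mat x a b = ?e b" for b
    using ut_comm_row_mat_eq_iff[OF a one_in_idx e w] Z_eq unfolding t x_def by simp
  have x_low: "x k = 0" if "k < m" for k
    using vec_mat_eq_0_imp_eq_0[OF a, of x m k] x_idx xa that by auto
  have "vec_mat x a m = x m * a m m"
    unfolding vec_mat_def by (rule sum_eq_single) (use x_low in auto)
  then have xm: "x m = 1" using xa UT_diag[OF a m(2)] by simp
  have "w 2 = 0"
    using xm x_low[of 2] m unfolding x_def by (cases "m = 2") auto
  then have "\<phi> ?Z = row_mat n w"
    using Z_eq phi_row_mat_fixed[OF w] by simp
  moreover have "\<phi> ?Z = ut_comm n (\<phi> a) ?t"
    using phi_comm_transv(1)[OF a one_in_idx m(2)] m by simp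
  ultimately have "ut_comm n (\<phi> a) (row_mat n ?e) = row_mat n w"
    unfolding t by simp
  then have x_phi_a: "vec_mat x (\<phi> a) b = ?e b" for b
    using ut_comm_row_mat_eq_iff[OF phi_UT[OF a] one_in_idx e w] unfolding x_def by simp
  show ?thesis by (rule that[of x]) (use xm x_low xa x_phi_a in simp_all)
qed

lemma phi_lower_rows:
  assumes a: "a \<in> UT n" and m: "2 \<le> m"
  shows "\<phi> a m c = a m c"
  using m
proof (induction "c - m" arbitrary: m rule: less_induct)
  case less
  show ?case
  proof (cases "m \<in> idx n \<and> m \<le> c")
    case False
    then show ?thesis using a phi_UT[OF a] by (auto simp: UT_row_outside UT_below_diag)
  next
    case True
    obtain x where x: "x m = 1" "\<And>k. k < m \<Longrightarrow> x k = 0" "\<And>c. vec_mat x a c = vec_mat x (\<phi> a) c"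
      using phi_lower_row_witness[OF a less.prems] True by blast
    have "0 = (\<Sum>k\<in>{..c}. x k * (a k c - \<phi> a k c))"
      using x(3)[of c] by (simp add: vec_mat_def sum_subtractf right_diff_distrib)
    also have "\<dots> = x m * (a m c - \<phi> a m c)"
    proof (rule sum_eq_single)
      fix k assume k: "k \<in> {..c}" "k \<noteq> m"
      show "x k * (a k c - \<phi> a k c) = 0"
      proof (cases "k < m")
        case False
        then have "c - k < c - m" "2 \<le> k" using k less.prems True by auto
        then show ?thesis using less.hyps by simp
      qed (use x in simp)
    qed (use True in auto)
    finally show ?thesis using x by simp
  qed
qed

lemma phi_off_row_1:
  assumes a: "a \<in> UT n" and i: "i \<noteq> 1"
  shows "\<phi> a i c = a i c"
  using phi_lower_rows[OF a, of i c] UT_row_0[OF a] UT_row_0[OF phi_UT[OF a]] i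
  by (cases "i = 0") auto

text \<open>The hypothesis \<open>n = enat q \<or> n = \<infinity>\<close>: either \<open>q\<close> is the last index or there is none.\<close>
lemma phi_col_mat_row_1:
  assumes q: "q \<in> idx n" "n = enat q \<or> n = \<infinity>" and v: "col_vec q v" and b: "b \<noteq> q"
  shows "\<phi> (col_mat n q v) 1 b = ut_one n 1 b"
proof (cases "2 \<le> b \<and> b \<in> idx n")
  case outside: False
  have K: "col_mat n q v \<in> UT n" by (rule col_mat_UT[OF q(1) v])
  show ?thesis
  proof (cases "b \<le> 1")
    case True
    then have "\<phi> (col_mat n q v) 1 b = col_mat n q v 1 b" by (rule phi_row_1_low[OF K])
    then show ?thesis using b by (simp add: col_mat_def)
  next
    case False
    then show ?thesis using outside UT_col_outside[OF phi_UT[OF K]] by (simp add: ut_one_def)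
  qed
next
  case True
  define r where "r = (if b < q then q else Suc b)"
  have r: "r \<in> idx n" "b < r" "q \<le> r" using True b q unfolding r_def by (auto simp: idx_def)
  have K: "col_mat n q v \<in> UT n" by (rule col_mat_UT[OF q(1) v])
  have "ut_comm n (col_mat n q v) (transv n b r 1) = ut_one n"
    using col_mat_transv_commute[OF q(1) v _ r(1,2)] True b col_vec_beyond[OF v r(3)]
      ut_comm_eq_one_iff[OF K transv_UT[OF _ r(1,2)]] by simp
  then have "ut_comm n (\<phi> (col_mat n q v)) (transv n b r 1) = ut_one n"
    using True r by (intro phi_comm_transv_eq_one[OF K]) auto
  then have "ut_mult (\<phi> (col_mat n q v)) (transv n b r 1) 1 r = ut_mult (transv n b r 1) (\<phi> (col_mat n q v)) 1 r"
    using ut_comm_eq_one_iff[OF phi_UT[OF K] transv_UT[OF _ r(1,2)]] True by simp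
  then show ?thesis
    using True r by (simp add: ut_mult_transv[OF phi_UT[OF K]] transv_ut_mult[OF phi_UT[OF K]] ut_one_def)
qed

lemma phi_col_mat_form:
  assumes q: "q \<in> idx n" "n = enat q \<or> n = \<infinity>" "2 \<le> q" and v: "col_vec q v"
  obtains \<theta> where "\<phi> (col_mat n q v) = col_mat n q (\<lambda>a. v a + (if a = 1 then \<theta> else 0))"
proof
  let ?\<theta> = "\<phi> (col_mat n q v) 1 q - v 1"
  have K: "col_mat n q v \<in> UT n" by (rule col_mat_UT[OF q(1) v])
  show "\<phi> (col_mat n q v) = col_mat n q (\<lambda>a. v a + (if a = 1 then ?\<theta> else 0))"
  proof (intro ext)
    fix a b
    show "\<phi> (col_mat n q v) a b = col_mat n q (\<lambda>a. v a + (if a = 1 then ?\<theta> else 0)) a b"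
    proof (cases "a = 1")
      case True
      then show ?thesis using phi_col_mat_row_1[OF q(1,2) v, of b] q(3)
        by (cases "b = q") (auto simp: col_mat_def ut_one_def)
    qed (use phi_off_row_1[OF K, of a b] in \<open>simp add: col_mat_def\<close>)
  qed
qed

text \<open>The commutator \<open>[g, t\<^sub>l\<^sub>q(1)]\<close> is the column matrix in the hypothesis \<open>fixed\<close>; since it
  determines column \<open>l\<close> of \<open>g\<close>, so does \<open>[\<phi> g, t\<^sub>l\<^sub>q(1)]\<close>.\<close>
lemma phi_col_eq_if_fixed:
  assumes g: "g \<in> UT n" and q: "q \<in> idx n"
    and rows: "\<And>c. c \<noteq> q \<Longrightarrow> g q c = 0" "\<And>c. c \<noteq> q \<Longrightarrow> \<phi> g q c = 0"
    and l: "1 \<le> l" "l < q"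
    and fixed: "\<phi> (col_mat n q (\<lambda>i. g i l - ut_one n i l)) = col_mat n q (\<lambda>i. g i l - ut_one n i l)"
  shows "\<phi> g i l = g i l"
proof -
  let ?u = "\<lambda>i. g i l - ut_one n i l" and ?e = "\<lambda>i. if i = l then (1::'a) else 0"
  have lidx: "l \<in> idx n" using idx_downward_closed[OF q l(1)] l by simp
  have u: "col_vec q ?u" using col_vec_mono[OF col_vec_UT_column[OF g lidx]] l by simp
  have e: "col_vec q ?e" using l by (intro col_vec_delta)
  have "ut_comm n g (col_mat n q ?e) = col_mat n q ?u"
    using ut_comm_col_mat_eq_iff[OF g q rows(1) e u] l lidx by (simp add: mat_vec_delta ut_one_def)
  then have "ut_comm n (\<phi> g) (col_mat n q ?e) = col_mat n q ?u"
    using phi_comm[OF g col_mat_UT[OF q e]] phi_col_mat_delta[OF q l] fixed by simp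
  then have "mat_vec q (\<phi> g) ?e i = ?u i + ?e i"
    using ut_comm_col_mat_eq_iff[OF phi_UT[OF g] q rows(2) e u] by simp
  then show ?thesis using l lidx by (simp add: mat_vec_delta ut_one_def)
qed

lemma phi_shift_mat_row:
  assumes q: "q \<in> idx n" "2 \<le> q" and c: "c \<noteq> q"
  shows "\<phi> (shift_mat n q) q c = 0"
  using phi_lower_rows[OF shift_mat_UT[OF q(1)] q(2)] shift_mat_row[OF c] by simp

lemma phi_shift_mat_left_cols:
  assumes q: "q \<in> idx n" "2 \<le> q" and k: "k < q"
  shows "\<phi> (shift_mat n q) i k = shift_mat n q i k"
proof -
  let ?S = "shift_mat n q :: 'a mat"
  have S: "?S \<in> UT n" by (rule shift_mat_UT[OF q(1)])
  have S_row: "?S q c = 0" and phi_S_row: "\<phi> ?S q c = 0" if "c \<noteq> q" for c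
    using shift_mat_row[OF that] phi_shift_mat_row[OF q that] by simp_all
  show ?thesis
  proof (cases "i = 1 \<and> 2 \<le> k")
    case True
    have "(\<lambda>i. ?S i k - ut_one n i k) = (\<lambda>i. if i = k - 1 then 1 else 0)"
      using True k idx_downward_closed[OF q(1), of k] by (intro ext) (auto simp: shift_mat_def ut_one_def)
    moreover have "\<phi> (col_mat n q (\<lambda>i. if i = k - 1 then 1 else 0)) = col_mat n q (\<lambda>i. if i = k - 1 then 1 else 0)"
      using True k by (intro phi_col_mat_delta[OF q(1)]) auto
    ultimately show ?thesis
      using phi_col_eq_if_fixed[OF S q(1) S_row phi_S_row _ k, of i] True by simp
  next
    case False
    then show ?thesis using phi_off_row_1[OF S] phi_row_1_low[OF S] by (cases "i = 1") auto
  qed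
qed

lemma phi_col_mat_fixed:
  assumes q: "q \<in> idx n" "n = enat q \<or> n = \<infinity>" and p: "col_vec l p" and l: "l < q"
  shows "\<phi> (col_mat n q p) = col_mat n q p"
proof (cases "2 \<le> q")
  case False
  then have "p = (\<lambda>_. 0)" using col_vecD[OF p] l by fastforce
  then show ?thesis by (simp add: col_mat_zero phi_one)
next
  case q2: True
  let ?S = "shift_mat n q :: 'a mat"
  have S: "?S \<in> UT n" by (rule shift_mat_UT[OF q(1)])
  have S_row: "?S q c = 0" and phi_S_row: "\<phi> ?S q c = 0" if "c \<noteq> q" for c
    using shift_mat_row[OF that] phi_shift_mat_row[OF q(1) q2 that] by simp_all
  define v where "v = (\<lambda>a. if 2 \<le> a \<and> a < q then p (a - 1) else 0)"
  have v: "col_vec q v" unfolding v_def col_vec_def by auto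
  have p_shift: "p a = (if 1 \<le> a \<and> Suc a < q then v (Suc a) else 0)" for a
    using col_vecD[OF p, of a] l by (cases "p a = 0") (auto simp: v_def)
  obtain \<theta> where \<theta>: "\<phi> (col_mat n q v) = col_mat n q (\<lambda>a. v a + (if a = 1 then \<theta> else 0))"
    using phi_col_mat_form[OF q q2 v] by blast
  let ?v' = "\<lambda>a. v a + (if a = 1 then \<theta> else 0)"
  have v': "col_vec q ?v'" using v q2 unfolding col_vec_def by auto
  have "ut_comm n ?S (col_mat n q v) = col_mat n q p"
    using ut_comm_col_mat_eq_iff[OF S q(1) S_row v col_vec_mono[OF p less_imp_le[OF l]]]
      mat_vec_shift_mat[OF q(1) v] p_shift by simp
  then have "\<phi> (col_mat n q p) = ut_comm n (\<phi> ?S) (col_mat n q ?v')"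
    using phi_comm[OF S col_mat_UT[OF q(1) v]] \<theta> by simp
  moreover have "\<forall>a. mat_vec q (\<phi> ?S) ?v' a = p a + ?v' a"
  proof
    fix a
    have "mat_vec q (\<phi> ?S) ?v' a = mat_vec q ?S ?v' a"
      unfolding mat_vec_def
    proof (rule sum.cong[OF refl])
      fix k
      show "\<phi> ?S a k * ?v' k = ?S a k * ?v' k"
        using phi_shift_mat_left_cols[OF q(1) q2, of k a] col_vec_beyond[OF v', of k] by (cases "k < q") auto
    qed
    also have "\<dots> = p a + ?v' a"
      using mat_vec_shift_mat[OF q(1) v'] p_shift[of a] by simp
    finally show "mat_vec q (\<phi> ?S) ?v' a = p a + ?v' a" .
  qed
  then have "ut_comm n (\<phi> ?S) (col_mat n q ?v') = col_mat n q p"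
    using ut_comm_col_mat_eq_iff[OF phi_UT[OF S] q(1) phi_S_row v' col_vec_mono[OF p less_imp_le[OF l]]]
    by blast
  ultimately show ?thesis by simp
qed

lemma phi_col_below_last:
  assumes nN: "n = enat N" and a: "a \<in> UT n" and l: "l < N"
  shows "\<phi> a i l = a i l"
proof (cases "l = 0")
  case True
  then show ?thesis using a phi_UT[OF a] by (simp add: UT_col_0)
next
  case False
  have N: "N \<in> idx n" "1 \<le> N" using l nN by (auto simp: idx_enat)
  have last_row: "h N c = 0" if "h \<in> UT n" "c \<noteq> N" for h :: "'a mat" and c
    using UT_last_row[of h N c] that nN N by simp
  have "col_vec l (\<lambda>i. a i l - ut_one n i l)"
    using col_vec_UT_column[OF a] False l nN by (simp add: idx_enat)
  then show ?thesis
    using phi_col_eq_if_fixed[OF a N(1) last_row[OF a] last_row[OF phi_UT[OF a]] _ l]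
      phi_col_mat_fixed[OF N(1) _ _ l] nN False by simp
qed

lemma phi_row_1_infinity:
  assumes ninf: "n = \<infinity>" and a: "a \<in> UT n" and m: "2 \<le> m"
  shows "\<phi> a 1 m = a 1 m"
proof -
  let ?t = "transv n m (Suc m) (1::'a)" and ?q = "Suc (Suc m)"
  let ?M = "ut_comm n a ?t"
  have idx: "m \<in> idx n" "Suc m \<in> idx n" "?q \<in> idx n" using m ninf by (auto simp: idx_infinity)
  have M: "?M \<in> UT n" using idx by (intro ut_comm_UT[OF a] transv_UT) auto
  have phi_M: "\<phi> ?M = ut_comm n (\<phi> a) ?t" by (rule phi_comm_transv(1)[OF a idx(1,2) lessI])
  have row_q: "ut_comm n g ?t ?q c = 0" if "g \<in> UT n" "c \<noteq> ?q" for g c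
    using ut_comm_transv_succ_lower_rows[OF that(1) _ idx(2), of ?q c] m that(2) by (simp add: ut_one_def)
  have "\<phi> ?M 1 (Suc m) = ?M 1 (Suc m)"
  proof (rule phi_col_eq_if_fixed[OF M idx(3)])
    show "\<phi> (col_mat n ?q (\<lambda>i. ?M i (Suc m) - ut_one n i (Suc m)))
        = col_mat n ?q (\<lambda>i. ?M i (Suc m) - ut_one n i (Suc m))"
      using ninf by (intro phi_col_mat_fixed[OF idx(3) _ col_vec_UT_column[OF M idx(2)]]) auto
  qed (use row_q[OF a] row_q[OF phi_UT[OF a]] phi_M in auto)
  then show ?thesis
    using phi_M ut_comm_transv_succ_corner[OF a m idx(2)] ut_comm_transv_succ_corner[OF phi_UT[OF a] m idx(2)]
    by simp
qed

lemma phi_eq_off_corner: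
  assumes nN: "n = enat N" and a: "a \<in> UT n" and ic: "i \<noteq> 1 \<or> c \<noteq> N"
  shows "\<phi> a i c = a i c"
proof (cases "i = 1")
  case True
  then consider "c < N" | "N < c" using ic by linarith
  then show ?thesis
  proof cases
    case 2
    then have "c \<notin> idx n" using nN by (simp add: idx_enat)
    then show ?thesis using UT_col_outside[OF a] UT_col_outside[OF phi_UT[OF a]] by simp
  qed (rule phi_col_below_last[OF nN a])
qed (rule phi_off_row_1[OF a])

lemma phi_eq_enat_1:
  assumes "n = enat 1" and a: "a \<in> UT n"
  shows "\<phi> a = a"
  using phi_eq_off_corner[OF assms] phi_row_1_low[OF a, of 1] by (intro ext) (metis order_refl)

lemma phi_eq_ut_mult_transv_corner:
  assumes nN: "n = enat N" and N: "2 \<le> N" and a: "a \<in> UT n"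
  shows "\<phi> a = ut_mult a (transv n 1 N (\<phi> a 1 N - a 1 N))"
  using phi_eq_off_corner[OF nN a] ut_mult_transv_1_last[of a N, OF _ N] a nN
  by (intro ext) auto

lemma phi_eq_infinity:
  assumes ninf: "n = \<infinity>" and a: "a \<in> UT n"
  shows "\<phi> a = a"
proof (intro ext)
  fix i c
  show "\<phi> a i c = a i c"
  proof (cases "i = 1")
    case True
    then show ?thesis
      using phi_row_1_low[OF a, of c] phi_row_1_infinity[OF ninf a, of c] by (cases "c \<le> 1") auto
  qed (rule phi_off_row_1[OF a])
qed

end

theorem mainTheorem12:
  fixes n :: enat and \<phi> :: "('a::field) mat \<Rightarrow> 'a mat"
  assumes "n \<ge> 1"
    and "PC_map n \<phi>"
    and "almost_identity n \<phi>"
  shows "(\<exists>f. \<forall>a \<in> UT n. f a \<in> ut_center n \<and> \<phi> a = ut_mult a (f a))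
         \<and> (\<forall>m. n = enat m \<and> m \<ge> 2 \<longrightarrow>
              (\<exists>f :: 'a mat \<Rightarrow> 'a. \<forall>a \<in> UT n. \<phi> a = ut_mult a (transv n 1 m (f a))))
         \<and> (n = \<infinity> \<longrightarrow> (\<forall>a \<in> UT n. \<phi> a = a))"
proof -
  interpret almost_identity_PC n \<phi> using assms by unfold_locales
  have trivial_center: "\<exists>f. \<forall>a \<in> UT n. f a \<in> ut_center n \<and> \<phi> a = ut_mult a (f a)"
    if "\<And>a. a \<in> UT n \<Longrightarrow> \<phi> a = a"
    using that by (intro exI[of _ "\<lambda>_. ut_one n"]) (simp add: ut_one_center ut_mult_one_right)
  show ?thesis
  proof (cases n)
    case (enat N)
    show ?thesis
    proof (cases "2 \<le> N")
      case True
      then show ?thesis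
        using enat phi_eq_ut_mult_transv_corner[OF enat True] transv_1_last_center[OF True]
        by (intro conjI exI[of _ "\<lambda>a. transv n 1 N (\<phi> a 1 N - a 1 N)"] allI impI
            exI[of _ "\<lambda>a. \<phi> a 1 N - a 1 N"]) auto
    next
      case False
      then have "N = 1" using assms(1) enat by (simp add: one_enat_def)
      then show ?thesis using enat False trivial_center phi_eq_enat_1 by simp
    qed
  next
    case infinity
    then show ?thesis using trivial_center phi_eq_infinity by simp
  qed
qed

end
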